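(* Let $(L,R)$, $(\beta_{j,n})$, $(\nu_t)$ be as in the context and let $\alpha>0$ with $\mathbb E[L^{2\alpha}+R^{2\alpha}]<+\infty$. Then there is a constant $C_\mu\in(0,\infty)$, independent of $t$, such that for every $t\ge1$ \[ e^{-2\mathcal S(\alpha)t}\,\mathbb E[M_{\nu_t}(\alpha)^2]\le\tilde h(t), \] where $\tilde h(t):=C_\mu$ if $\mu(2\alpha)<\mu(\alpha)$ and $2\mathcal S(\alpha)>-1$, and $\tilde h(t):=C_\mu h(t)$ otherwise, with $h$ as defined in the context.
   Context: $(L,R)$ is a random vector with $L,R\ge 0$ and $P\{L>0\}+P\{R>0\}>1$. For $s\ge0$ set $\mathcal S(s):=\mathbb E[L^s+R^s]-1$ (with $0^0=0$) and for $s>0$, $\mu(s):=\mathcal S(s)/s$. Let $(L_n,R_n)_{n\ge1}$ be i.i.d. copies of $(L,R)$ and $(I_n)_{n\ge1}$ independent random variables, independent of $(L_n,R_n)_n$, with $I_n$ uniform on $\{1,\dots,n\}$. Weights: $\beta_{1,1}:=1$, $(\beta_{1,2},\beta_{2,2}):=(L_1,R_1)$, and for $n\ge2$, $(\beta_{1,n+1},\dots,\beta_{n+1,n+1}):=(\beta_{1,n},\dots,\beta_{I_n-1,n},L_n\beta_{I_n,n},R_n\beta_{I_n,n},\beta_{I_n+1,n},\dots,\beta_{n,n})$. $(\nu_t)_{t\ge0}$ is a Yule process started at $\nu_0=1$ (pure birth with rate $n$ in state $n$), independent of $((L_n,R_n,I_n))_n$; $P\{\nu_t=n\}=e^{-t}(1-e^{-t})^{n-1}$.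 $M_n(\alpha):=\sum_{j=1}^n\beta_{j,n}^\alpha$. The function $h$: $h(t)=t$ if $\mu(2\alpha)<\mu(\alpha)$ and $2\mathcal S(\alpha)=-1$; $h(t)=e^{-(2\mathcal S(\alpha)+1)t}$ if $\mu(2\alpha)<\mu(\alpha)$ and $2\mathcal S(\alpha)<-1$; $h(t)=e^{2\alpha(\mu(2\alpha)-\mu(\alpha))t}$ if $\mu(2\alpha)>\mu(\alpha)$; $h(t)=e^{\eta t}$ for an arbitrary fixed $\eta>0$ (the constant $C_\mu$ may then depend on $\eta$) if $\mu(2\alpha)=\mu(\alpha)$ and $\mathcal S(\alpha)>0$; $h(t)=te^{-(2\mathcal S(\alpha)+1)t}$ if $\mu(2\alpha)=\mu(\alpha)$ and $2\mathcal S(\alpha)<-1$; $h(t)=t^2$ if $\mu(2\alpha)=\mu(\alpha)$ and $2\mathcal S(\alpha)=-1$; $h(t)=t$ if $\mu(2\alpha)=\mu(\alpha)$ and $-1<2\mathcal S(\alpha)\le0$. *)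

theory Defs
  imports "HOL-Probability.Probability"
begin

text \<open>The sigma-algebra (family of events) generated by a random variable X : M -> N,
  exactly as in the definition of indep_vars (indep_vars_def2).\<close>
definition rv_events :: "'a measure \<Rightarrow> 'b measure \<Rightarrow> ('a \<Rightarrow> 'b) \<Rightarrow> 'a set set" where
  "rv_events M N X = {X -` A \<inter> space M | A. A \<in> sets N}"

text \<open>S(s) = E[L^s + R^s] - 1 for the law D of (L,R); note 0 powr s = 0, so 0^0 = 0.\<close>
definition S_fun :: "(real \<times> real) measure \<Rightarrow> real \<Rightarrow> real" where
  "S_fun D s = (\<integral>x. fst x powr s + snd x powr s \<partial>D) - 1"

definition mu_fun :: "(real \<times> real) measure \<Rightarrow> real \<Rightarrow> real" where
  "mu_fun D s = S_fun D s / s"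

text \<open>beta lr ii n = [beta_{1,n}, ..., beta_{n,n}] built from (L_k,R_k) = lr k and I_k = ii k.\<close>
fun beta :: "(nat \<Rightarrow> real \<times> real) \<Rightarrow> (nat \<Rightarrow> nat) \<Rightarrow> nat \<Rightarrow> real list" where
  "beta lr ii 0 = []"
| "beta lr ii (Suc 0) = [1]"
| "beta lr ii (Suc (Suc m)) =
     (let b = beta lr ii (Suc m);
          k = (if m = 0 then 1 else ii (Suc m))
      in take (k - 1) b @ [fst (lr (Suc m)) * b ! (k - 1), snd (lr (Suc m)) * b ! (k - 1)] @ drop k b)"

definition Mn :: "real \<Rightarrow> (nat \<Rightarrow> real \<times> real) \<Rightarrow> (nat \<Rightarrow> nat) \<Rightarrow> nat \<Rightarrow> real" where
  "Mn \<alpha> lr ii n = (\<Sum>b\<leftarrow>beta lr ii n. b powr \<alpha>)"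

text \<open>The function h of the context, with S1 = S(alpha), m1 = mu(alpha), m2 = mu(2 alpha);
  eta is the arbitrary positive parameter used in the case mu(2a)=mu(a), S(a)>0.\<close>
definition h_fun :: "real \<Rightarrow> real \<Rightarrow> real \<Rightarrow> real \<Rightarrow> real \<Rightarrow> real \<Rightarrow> real" where
  "h_fun \<alpha> S1 m1 m2 \<eta> t =
    (if m2 < m1 \<and> 2 * S1 = -1 then t
     else if m2 < m1 \<and> 2 * S1 < -1 then exp (- (2 * S1 + 1) * t)
     else if m2 > m1 then exp (2 * \<alpha> * (m2 - m1) * t)
     else if m2 = m1 \<and> S1 > 0 then exp (\<eta> * t)
     else if m2 = m1 \<and> 2 * S1 < -1 then t * exp (- (2 * S1 + 1) * t)
     else if m2 = m1 \<and> 2 * S1 = -1 then t ^ 2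
     else if m2 = m1 \<and> -1 < 2 * S1 \<and> 2 * S1 \<le> 0 then t
     else undefined)"

definition htilde_fun :: "real \<Rightarrow> real \<Rightarrow> real \<Rightarrow> real \<Rightarrow> real \<Rightarrow> real \<Rightarrow> real \<Rightarrow> real" where
  "htilde_fun C \<alpha> S1 m1 m2 \<eta> t =
    (if m2 < m1 \<and> 2 * S1 > -1 then C else C * h_fun \<alpha> S1 m1 m2 \<eta> t)"

text \<open>Index set for the joint independence of (L_n,R_n)_{n>=1}, (I_n)_{n>=1} and nu_t.\<close>
definition idx :: "(nat + nat + unit) set" where
  "idx = Inl ` {1..} \<union> Inr ` Inl ` {1..} \<union> {Inr (Inr ())}"

end

theory Submission
  imports Defs
begin

(* Going from beta_n to beta_(n+1) replaces one weight b, chosen uniformly and independently of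
   the past, by (L b, R b) for a fresh copy of (L, R); so b^alpha is multiplied by
   X = L^alpha + R^alpha. Conditioning on the past gives exact linear recursions: for
   Q_n = sum_j beta_(j,n)^(2 alpha) one gets E Q_n = prod_(k<n) (1 + S(2 alpha)/k), and
     E M_(n+1)^2 = (1 + 2 S(alpha)/n) E M_n^2 + d E Q_n / n,   d = E[(X - 1)^2].
   The solution of the second recursion is dominated by a combination of two products
   prod_(k<n) (1 + s/k), whose averages against the geometric law of nu_t are exactly e^(s t).
   Hence e^(-2 S(alpha) t) E M_(nu_t)^2 <= 1 + d (e^(delta t) - 1) / delta for every nonzero
   delta >= S(2 alpha) - 2 S(alpha), and the sign of S(2 alpha) - 2 S(alpha) (with delta = 1/t in
   the critical case) gives the regimes of h. *)

section \<open>Splitting sequences\<close>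

definition admissible_split :: "(nat \<Rightarrow> real \<times> real) \<Rightarrow> (nat \<Rightarrow> nat) \<Rightarrow> bool" where
  "admissible_split lr ii \<longleftrightarrow> (\<forall>k\<ge>1. fst (lr k) \<ge> 0 \<and> snd (lr k) \<ge> 0 \<and> ii k \<in> {1..k})"

lemma admissible_splitD:
  "admissible_split lr ii \<Longrightarrow> n \<ge> 1 \<Longrightarrow> ii n \<in> {1..n} \<and> fst (lr n) \<ge> 0 \<and> snd (lr n) \<ge> 0"
  unfolding admissible_split_def by auto

lemma beta_cong:
  assumes "\<And>k. k \<ge> 1 \<Longrightarrow> lr k = lr' k" "\<And>k. k \<ge> 1 \<Longrightarrow> ii k = ii' k"
  shows "beta lr ii n = beta lr' ii' n"
proof (induction n rule: induct_nat_012)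
  case (ge2 m)
  then show ?case using assms by (simp add: Let_def)
qed simp_all

lemma beta_Suc:
  assumes adm: "admissible_split lr ii" and n: "n \<ge> 1"
  shows "beta lr ii (Suc n) =
     take (ii n - 1) (beta lr ii n)
       @ [fst (lr n) * beta lr ii n ! (ii n - 1), snd (lr n) * beta lr ii n ! (ii n - 1)]
       @ drop (ii n) (beta lr ii n)"
proof -
  obtain m where m: "n = Suc m" using n by (cases n) auto
  have "ii 1 = 1" using adm unfolding admissible_split_def by auto
  then show ?thesis using m by (cases m) (simp_all add: Let_def)
qed

lemma length_beta:
  assumes adm: "admissible_split lr ii"
  shows "length (beta lr ii n) = n"
proof (induction n)
  case (Suc n)
  then show ?case
    using admissible_splitD[OF adm, of n] by (cases "n = 0") (auto simp: beta_Suc[OF adm])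
qed simp

lemma beta_nonneg:
  assumes adm: "admissible_split lr ii"
  shows "x \<in> set (beta lr ii n) \<Longrightarrow> x \<ge> 0"
proof (induction n arbitrary: x)
  case (Suc n)
  show ?case
  proof (cases "n = 0")
    case False
    let ?b = "beta lr ii n"
    have k: "ii n \<in> {1..n}" and lr: "fst (lr n) \<ge> 0" "snd (lr n) \<ge> 0"
      using admissible_splitD[OF adm] False by auto
    have "?b ! (ii n - 1) \<ge> 0"
      using Suc.IH k length_beta[OF adm, of n] by (auto intro: nth_mem)
    moreover have "x \<in> set (beta lr ii (Suc n))" by (fact Suc.prems)
    then have "x \<in> set (take (ii n - 1) ?b) \<or> x \<in> set (drop (ii n) ?b)
        \<or> x = fst (lr n) * ?b ! (ii n - 1) \<or> x = snd (lr n) * ?b ! (ii n - 1)"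
      using False beta_Suc[OF adm, of n] by auto
    ultimately show ?thesis
      using Suc.IH lr by (auto dest: in_set_takeD in_set_dropD)
  qed (use Suc in simp)
qed simp

lemma beta_nth_nonneg:
  "admissible_split lr ii \<Longrightarrow> j < n \<Longrightarrow> beta lr ii n ! j \<ge> 0"
  using beta_nonneg length_beta by (metis nth_mem)

lemma sum_list_beta_Suc:
  fixes f :: "real \<Rightarrow> 'b::ab_group_add"
  assumes adm: "admissible_split lr ii" and n: "n \<ge> 1"
  shows "(\<Sum>x\<leftarrow>beta lr ii (Suc n). f x) = (\<Sum>x\<leftarrow>beta lr ii n. f x) - f (beta lr ii n ! (ii n - 1))
     + f (fst (lr n) * beta lr ii n ! (ii n - 1)) + f (snd (lr n) * beta lr ii n ! (ii n - 1))"
proof -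
  let ?b = "beta lr ii n" and ?k = "ii n"
  have k: "?k \<in> {1..n}" using admissible_splitD[OF adm n] by simp
  have "drop (?k - 1) ?b = ?b ! (?k - 1) # drop (Suc (?k - 1)) ?b"
    using k length_beta[OF adm, of n] by (intro Cons_nth_drop_Suc[symmetric]) auto
  moreover have "Suc (?k - 1) = ?k" using k by simp
  moreover have "(\<Sum>x\<leftarrow>?b. f x) = (\<Sum>x\<leftarrow>take (?k - 1) ?b. f x) + (\<Sum>x\<leftarrow>drop (?k - 1) ?b. f x)"
    by (metis append_take_drop_id map_append sum_list_append)
  ultimately show ?thesis unfolding beta_Suc[OF adm n] by (simp add: algebra_simps)
qed

lemma Mn_Suc:
  assumes adm: "admissible_split lr ii" and n: "n \<ge> 1"
  shows "Mn \<alpha> lr ii (Suc n) = Mn \<alpha> lr ii n - (beta lr ii n ! (ii n - 1)) powr \<alpha>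
      + (fst (lr n) powr \<alpha> + snd (lr n) powr \<alpha>) * (beta lr ii n ! (ii n - 1)) powr \<alpha>"
proof -
  have "beta lr ii n ! (ii n - 1) \<ge> 0"
    using admissible_splitD[OF adm n] by (intro beta_nth_nonneg[OF adm]) auto
  then show ?thesis
    using admissible_splitD[OF adm n]
    unfolding Mn_def sum_list_beta_Suc[OF adm n] by (simp add: powr_mult algebra_simps)
qed

lemma sum_list_sq_powr_beta_Suc:
  assumes adm: "admissible_split lr ii" and n: "n \<ge> 1"
  shows "(\<Sum>x\<leftarrow>beta lr ii (Suc n). (x powr \<alpha>)\<^sup>2)
      = (\<Sum>x\<leftarrow>beta lr ii n. (x powr \<alpha>)\<^sup>2) - ((beta lr ii n ! (ii n - 1)) powr \<alpha>)\<^sup>2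
      + ((fst (lr n) powr \<alpha>)\<^sup>2 + (snd (lr n) powr \<alpha>)\<^sup>2) * ((beta lr ii n ! (ii n - 1)) powr \<alpha>)\<^sup>2"
proof -
  have "beta lr ii n ! (ii n - 1) \<ge> 0"
    using admissible_splitD[OF adm n] by (intro beta_nth_nonneg[OF adm]) auto
  then show ?thesis
    using admissible_splitD[OF adm n]
    unfolding sum_list_beta_Suc[OF adm n] by (simp add: powr_mult algebra_simps power_mult_distrib)
qed

lemma sum_list_map_eq_sum_nth: "(\<Sum>x\<leftarrow>xs. f x) = (\<Sum>j<length xs. f (xs ! j))"
  by (simp add: sum_list_sum_nth atLeast0LessThan)

lemma Mn_eq_sum_nth:
  "admissible_split lr ii \<Longrightarrow> Mn \<alpha> lr ii n = (\<Sum>j<n. (beta lr ii n ! j) powr \<alpha>)"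
  unfolding Mn_def sum_list_map_eq_sum_nth by (simp add: length_beta)

lemma nth_splice:
  assumes k: "k \<in> {1..m}" and len: "length b = m"
  shows "(take (k - 1) b @ [x, y] @ drop k b) ! j =
    (if j < k - 1 then b ! j else if j = k - 1 then x else if j = k then y else b ! (j - 1))"
proof -
  have lt: "length (take (k - 1) b) = k - 1" using k len by (auto simp add: min_def)
  show ?thesis
  proof (cases "j < k - 1")
    case False
    then have shift: "(take (k - 1) b @ [x, y] @ drop k b) ! j = ([x, y] @ drop k b) ! (j - (k - 1))"
      using lt by (simp add: nth_append)
    consider "j = k - 1" | "j = k" | "j > k" using False k by force
    then show ?thesis
    proof cases
      case 3
      then have "([x, y] @ drop k b) ! (j - (k - 1)) = b ! (k + (j - k - 1))"
        using k len by (simp add: nth_append numeral_2_eq_2 nth_drop)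
      then show ?thesis using 3 shift k by auto
    qed (use k shift in auto)
  qed (use lt in \<open>simp add: nth_append\<close>)
qed

lemma measurable_beta_nth:
  fixes lr :: "'a \<Rightarrow> nat \<Rightarrow> real \<times> real" and ii :: "'a \<Rightarrow> nat \<Rightarrow> nat"
  assumes adm: "\<And>\<omega>. admissible_split (lr \<omega>) (ii \<omega>)"
    and lr: "\<And>k. 1 \<le> k \<Longrightarrow> k < n \<Longrightarrow> (\<lambda>\<omega>. lr \<omega> k) \<in> borel_measurable N"
    and ii: "\<And>k. 1 \<le> k \<Longrightarrow> k < n \<Longrightarrow> (\<lambda>\<omega>. ii \<omega> k) \<in> measurable N (count_space UNIV)"
  shows "(\<lambda>\<omega>. beta (lr \<omega>) (ii \<omega>) n ! j) \<in> borel_measurable N"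
  using lr ii
proof (induction n arbitrary: j)
  case (Suc n)
  show ?case
  proof (cases "n = 0")
    case False
    then have n: "n \<ge> 1" by simp
    have IH[measurable]: "\<And>j. (\<lambda>\<omega>. beta (lr \<omega>) (ii \<omega>) n ! j) \<in> borel_measurable N"
      using Suc by auto
    have "(\<lambda>\<omega>. lr \<omega> n) \<in> N \<rightarrow>\<^sub>M borel \<Otimes>\<^sub>M borel" using Suc.prems n by (simp add: borel_prod)
    note this[measurable]
    define f where "f k \<omega> = (if j < k - 1 then beta (lr \<omega>) (ii \<omega>) n ! j
      else if j = k - 1 then fst (lr \<omega> n) * beta (lr \<omega>) (ii \<omega>) n ! (k - 1)
      else if j = k then snd (lr \<omega> n) * beta (lr \<omega>) (ii \<omega>) n ! (k - 1)
      else beta (lr \<omega>) (ii \<omega>) n ! (j - 1))" for k \<omega>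
    have f: "(\<lambda>\<omega>. f k \<omega>) \<in> borel_measurable N" for k
      unfolding f_def by measurable
    have "(\<lambda>\<omega>. beta (lr \<omega>) (ii \<omega>) (Suc n) ! j) = (\<lambda>\<omega>. f (ii \<omega> n) \<omega>)"
      using admissible_splitD[OF adm n] length_beta[OF adm]
      unfolding beta_Suc[OF adm n] f_def by (subst nth_splice) auto
    moreover have "(\<lambda>\<omega>. ii \<omega> n) \<in> measurable N (count_space UNIV)" using Suc.prems n by simp
    ultimately show ?thesis
      using measurable_compose_countable[OF f] by simp
  qed simp
qed simp

lemma sum_leave_one_out_identity:
  fixes y :: "nat \<Rightarrow> real"
  shows "(\<Sum>j<n. ((\<Sum>i<n. y i) - y j)\<^sup>2 + 2 * a * (((\<Sum>i<n. y i) - y j) * y j) + e * (y j)\<^sup>2)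
     = (real n - 2 + 2 * a) * (\<Sum>i<n. y i)\<^sup>2 + (1 - 2 * a + e) * (\<Sum>i<n. (y i)\<^sup>2)"
proof -
  define S where "S = (\<Sum>i<n. y i)"
  have "(\<Sum>j<n. (S - y j)\<^sup>2 + 2 * a * ((S - y j) * y j) + e * (y j)\<^sup>2)
      = (\<Sum>j<n. S\<^sup>2 + (2 * a - 2) * S * y j + (1 - 2 * a + e) * (y j)\<^sup>2)"
    by (intro sum.cong) (auto simp: power2_eq_square algebra_simps)
  also have "\<dots> = real n * S\<^sup>2 + (2 * a - 2) * S * S + (1 - 2 * a + e) * (\<Sum>i<n. (y i)\<^sup>2)"
    by (simp add: sum.distrib sum_distrib_left S_def)
  finally show ?thesis unfolding S_def[symmetric]
    by (simp add: power2_eq_square algebra_simps)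
qed

lemma sum_pick_index:
  fixes G :: "nat \<Rightarrow> 'b::comm_monoid_add"
  assumes "k \<in> {1..n}"
  shows "G (k - 1) = (\<Sum>j<n. if k = Suc j then G j else 0)"
proof -
  have "(\<Sum>j<n. if k = Suc j then G j else 0) = (\<Sum>j<n. if j = k - 1 then G j else 0)"
    using assms by (intro sum.cong) auto
  then show ?thesis using assms by (auto simp: sum.delta)
qed

section \<open>Averages against the law of \<open>\<nu>\<^sub>t\<close>\<close>

definition yule_pmf :: "real \<Rightarrow> nat \<Rightarrow> real" where
  "yule_pmf t n = exp (- t) * (1 - exp (- t)) ^ (n - 1)"

text \<open>\<open>yule_factor s n = \<Prod>k=1..n-1. (1 + s / k)\<close>.\<close>
definition yule_factor :: "real \<Rightarrow> nat \<Rightarrow> real" where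
  "yule_factor s n = (real (n - 1) + s) gchoose (n - 1)"

lemma yule_factor_1 [simp]: "yule_factor s (Suc 0) = 1"
  by (simp add: yule_factor_def)

lemma yule_factor_Suc:
  assumes "n \<ge> 1"
  shows "yule_factor s (Suc n) = (1 + s / real n) * yule_factor s n"
proof -
  have "(real n + s) gchoose n = ((real n + s) / real n) * ((real n + s - 1) gchoose (n - 1))"
    using assms by (subst gbinomial_absorption') auto
  moreover have "real n + s - 1 = real (n - 1) + s" using assms by (simp add: of_nat_diff)
  ultimately show ?thesis using assms by (simp add: yule_factor_def field_simps)
qed

lemma yule_pmf_nonneg: "t \<ge> 0 \<Longrightarrow> yule_pmf t n \<ge> 0"
  by (simp add: yule_pmf_def)

text \<open>The generalised binomial series for \<open>(1 - z)\<^bsup>-(s+1)\<^esup>\<close> at \<open>z = 1 - e\<^sup>-\<^sup>t\<close>.\<close>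
lemma sums_yule_pmf_yule_factor:
  assumes t: "t > 0"
  shows "(\<lambda>m. yule_pmf t (Suc m) * yule_factor s (Suc m)) sums exp (s * t)"
proof -
  define z where "z = exp (-t) - 1"
  have z: "\<bar>z\<bar> < 1" using t by (auto simp: z_def abs_if)
  have "(\<lambda>n. ((-(s+1)) gchoose n) * z^n) sums (1 + z) powr (-(s+1))"
    by (rule gen_binomial_real[OF z])
  moreover have "((-(s+1)) gchoose n) * z^n = (1 - exp (-t)) ^ n * yule_factor s (Suc n)" for n
  proof -
    have "((-(s+1)) gchoose n) = (-1)^n * ((real n + s) gchoose n)"
      by (subst gbinomial_negated_upper) (simp add: algebra_simps)
    moreover have "z ^ n = (-1)^n * (1 - exp (-t)) ^ n"
      by (simp add: z_def power_mult_distrib[symmetric])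
    ultimately show ?thesis
      by (simp add: yule_factor_def power_mult_distrib[symmetric] mult_ac)
  qed
  moreover have "(1 + z) powr (-(s+1)) = exp ((s+1) * t)"
    by (simp add: z_def powr_def algebra_simps)
  ultimately have "(\<lambda>n. (1 - exp (-t)) ^ n * yule_factor s (Suc n)) sums exp ((s+1) * t)" by simp
  then have "(\<lambda>n. exp (-t) * ((1 - exp (-t)) ^ n * yule_factor s (Suc n))) sums (exp (-t) * exp ((s+1) * t))"
    by (rule sums_mult)
  moreover have "exp (-t) * exp ((s+1) * t) = exp (s * t)"
    by (simp add: exp_add[symmetric] algebra_simps)
  ultimately show ?thesis by (simp add: yule_pmf_def mult_ac)
qed

lemma yule_factor_nonneg:
  assumes "s \<ge> -1" "n \<ge> 1"
  shows "yule_factor s n \<ge> 0"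
  using assms(2)
proof (induction n rule: dec_induct)
  case (step n)
  have "0 \<le> 1 + s / real n" using assms step by (simp add: field_simps)
  then show ?case using step by (simp add: yule_factor_Suc)
qed simp

lemma yule_factor_mono:
  assumes "s \<ge> -1" "s \<le> s'" "n \<ge> 1"
  shows "yule_factor s n \<le> yule_factor s' n"
  using assms(3)
proof (induction n rule: dec_induct)
  case (step n)
  have "0 \<le> 1 + s / real n" using assms step by (simp add: field_simps)
  moreover have "1 + s / real n \<le> 1 + s' / real n" using assms by (simp add: divide_right_mono)
  ultimately have "(1 + s / real n) * yule_factor s n \<le> (1 + s' / real n) * yule_factor s' n"
    using step yule_factor_nonneg[OF assms(1) step(1)] by (meson mult_mono order_trans)
  then show ?case using step by (simp add: yule_factor_Suc)
qed simp

text \<open>With \<open>s = 2 S(\<alpha>)\<close>, \<open>d = E[(L\<^sup>\<alpha> + R\<^sup>\<alpha> - 1)\<^sup>2]\<close> and \<open>s' = S(2\<alpha>)\<close> this is \<open>E[M\<^sub>n(\<alpha>)\<^sup>2]\<close>.\<close>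
fun moment_seq :: "real \<Rightarrow> real \<Rightarrow> real \<Rightarrow> nat \<Rightarrow> real" where
  "moment_seq s d s' 0 = 0"
| "moment_seq s d s' (Suc 0) = 1"
| "moment_seq s d s' (Suc (Suc m)) =
     (1 + s / real (Suc m)) * moment_seq s d s' (Suc m) + d * yule_factor s' (Suc m) / real (Suc m)"

lemma moment_seq_Suc:
  "n \<ge> 1 \<Longrightarrow> moment_seq s d s' (Suc n) = (1 + s / real n) * moment_seq s d s' n + d * yule_factor s' n / real n"
  by (cases n) auto

lemma moment_seq_nonneg:
  assumes s: "s \<ge> -2" and d: "d \<ge> 0" and s': "s' \<ge> -1" and two: "1 + s + d \<ge> 0"
  shows "moment_seq s d s' n \<ge> 0"
proof (induction n rule: induct_nat_012)
  case (ge2 m)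
  show ?case
  proof (cases "m = 0")
    case False
    then have "0 \<le> 1 + s / real (Suc m)" using s by (simp add: field_simps)
    then show ?thesis using ge2 d yule_factor_nonneg[OF s', of "Suc m"] by simp
  qed (use two in simp)
qed simp_all

text \<open>The right-hand side solves the recursion of \<open>moment_seq\<close> with \<open>s'\<close> raised to \<open>s + \<delta>\<close>.\<close>
lemma moment_seq_le_yule_factors:
  assumes s: "s \<ge> -2" and s': "s' \<ge> -1" and d: "d \<ge> 0"
    and \<delta>: "\<delta> \<ge> s' - s" "\<delta> \<noteq> 0" and n: "n \<ge> 1"
  shows "moment_seq s d s' n \<le> (1 - d / \<delta>) * yule_factor s n + d / \<delta> * yule_factor (s + \<delta>) n"
  using n
proof (induction n rule: dec_induct)
  case (step n)
  define B where "B m = (1 - d / \<delta>) * yule_factor s m + d / \<delta> * yule_factor (s + \<delta>) m" for m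
  have B_Suc: "B (Suc n) = (1 + s / real n) * B n + d * yule_factor (s + \<delta>) n / real n"
    using step(1) \<delta>(2) unfolding B_def by (simp add: yule_factor_Suc field_simps)
  have "yule_factor s' n \<le> yule_factor (s + \<delta>) n"
    using yule_factor_mono[OF s' _ step(1)] \<delta>(1) by simp
  then have d_le: "d * yule_factor s' n / real n \<le> d * yule_factor (s + \<delta>) n / real n"
    using d by (simp add: divide_right_mono mult_left_mono)
  show ?case
  proof (cases "n = 1")
    case True
    then show ?thesis using d_le B_Suc by (simp add: B_def moment_seq_Suc)
  next
    case False
    then have "0 \<le> 1 + s / real n" using step(1) s by (simp add: field_simps)
    then have "(1 + s / real n) * moment_seq s d s' n \<le> (1 + s / real n) * B n"
      using step(3) by (simp add: B_def mult_left_mono)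
    then show ?thesis
      using d_le B_Suc step(1) unfolding B_def[symmetric] by (simp add: moment_seq_Suc)
  qed
qed simp

lemma yule_average_moment_seq:
  assumes s: "s \<ge> -2" and s': "s' \<ge> -1" and d: "d \<ge> 0" and two: "1 + s + d \<ge> 0"
    and \<delta>: "\<delta> \<ge> s' - s" "\<delta> \<noteq> 0" and t: "t > 0"
  shows "summable (\<lambda>m. yule_pmf t (Suc m) * moment_seq s d s' (Suc m))"
    and "exp (- s * t) * (\<Sum>m. yule_pmf t (Suc m) * moment_seq s d s' (Suc m))
       \<le> 1 + d * (exp (\<delta> * t) - 1) / \<delta>"
proof -
  define y where "y = d / \<delta>"
  define p where "p m = yule_pmf t (Suc m)" for m
  define A where "A m = moment_seq s d s' (Suc m)" for m
  have p0: "p m \<ge> 0" for m using t by (simp add: p_def yule_pmf_nonneg)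
  have le: "p m * A m \<le> (1 - y) * (p m * yule_factor s (Suc m)) + y * (p m * yule_factor (s + \<delta>) (Suc m))" for m
    using mult_left_mono[OF moment_seq_le_yule_factors[OF s s' d \<delta>] p0[of m]]
    by (simp add: A_def y_def algebra_simps)
  have su: "(\<lambda>m. (1 - y) * (p m * yule_factor s (Suc m)) + y * (p m * yule_factor (s + \<delta>) (Suc m)))
       sums ((1 - y) * exp (s * t) + y * exp ((s + \<delta>) * t))"
    unfolding p_def by (intro sums_add sums_mult sums_yule_pmf_yule_factor t)
  have summable_pA: "summable (\<lambda>m. p m * A m)"
    by (rule summable_comparison_test[OF _ sums_summable[OF su]])
       (use le p0 moment_seq_nonneg[OF s d s' two] in \<open>auto simp: A_def\<close>)
  then show "summable (\<lambda>m. yule_pmf t (Suc m) * moment_seq s d s' (Suc m))"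
    by (simp add: p_def A_def)
  have "(\<Sum>m. p m * A m) \<le> (1 - y) * exp (s * t) + y * exp ((s + \<delta>) * t)"
    using suminf_le[OF le summable_pA sums_summable[OF su]] sums_unique[OF su] by simp
  then have "exp (- s * t) * (\<Sum>m. p m * A m)
      \<le> exp (- s * t) * ((1 - y) * exp (s * t) + y * exp ((s + \<delta>) * t))"
    by (rule mult_left_mono) simp
  also have "\<dots> = 1 + d * (exp (\<delta> * t) - 1) / \<delta>"
    by (simp add: y_def algebra_simps diff_divide_distrib flip: exp_add)
  finally show "exp (- s * t) * (\<Sum>m. yule_pmf t (Suc m) * moment_seq s d s' (Suc m))
       \<le> 1 + d * (exp (\<delta> * t) - 1) / \<delta>"
    by (simp add: p_def A_def)
qed

section \<open>The three regimes of \<open>h\<close>\<close>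

lemma htilde_bound_subcritical:
  assumes \<alpha>: "\<alpha> > 0" and d: "d \<ge> 0" and sub: "S2 < 2 * S1"
    and bound: "\<And>t. t \<ge> 1 \<Longrightarrow> B t \<le> 1 + d * (exp ((S2 - 2 * S1) * t) - 1) / (S2 - 2 * S1)"
  shows "\<exists>C>0. \<forall>t\<ge>1. B t \<le> htilde_fun C \<alpha> S1 (S1 / \<alpha>) (S2 / (2 * \<alpha>)) \<eta> t"
proof (intro exI conjI allI impI)
  define \<gamma> where "\<gamma> = 2 * S1 - S2"
  have \<gamma>: "\<gamma> > 0" using sub by (simp add: \<gamma>_def)
  show C: "1 + d / \<gamma> > 0" using \<gamma> d by (simp add: add_pos_nonneg)
  fix t :: real assume t: "t \<ge> 1"
  have "S2 - 2 * S1 = - \<gamma>" by (simp add: \<gamma>_def)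
  then have "d * (exp ((S2 - 2 * S1) * t) - 1) / (S2 - 2 * S1) = d * (1 - exp (- \<gamma> * t)) / \<gamma>"
    by (simp only: divide_minus_right) (simp add: algebra_simps minus_divide_left)
  then have "B t \<le> 1 + d * (1 - exp (- \<gamma> * t)) / \<gamma>"
    using bound[OF t] by simp
  also have "\<dots> \<le> 1 + d / \<gamma>"
    using \<gamma> d by (simp add: divide_right_mono mult_left_le)
  also have "\<dots> \<le> htilde_fun (1 + d / \<gamma>) \<alpha> S1 (S1 / \<alpha>) (S2 / (2 * \<alpha>)) \<eta> t"
  proof -
    have "1 \<le> exp (- (2 * S1 + 1) * t)" if "2 * S1 < -1"
      using that t by (simp add: mult_nonpos_nonneg)
    moreover have "S2 / (2 * \<alpha>) < S1 / \<alpha>" using sub \<alpha> by (simp add: field_simps)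
    ultimately show ?thesis
      using C t unfolding htilde_fun_def h_fun_def by (auto simp: mult_le_cancel_left1)
  qed
  finally show "B t \<le> htilde_fun (1 + d / \<gamma>) \<alpha> S1 (S1 / \<alpha>) (S2 / (2 * \<alpha>)) \<eta> t" .
qed

lemma htilde_bound_supercritical:
  assumes \<alpha>: "\<alpha> > 0" and d: "d \<ge> 0" and sup: "S2 > 2 * S1"
    and bound: "\<And>t. t \<ge> 1 \<Longrightarrow> B t \<le> 1 + d * (exp ((S2 - 2 * S1) * t) - 1) / (S2 - 2 * S1)"
  shows "\<exists>C>0. \<forall>t\<ge>1. B t \<le> htilde_fun C \<alpha> S1 (S1 / \<alpha>) (S2 / (2 * \<alpha>)) \<eta> t"
proof (intro exI conjI allI impI)
  define \<delta> where "\<delta> = S2 - 2 * S1"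
  have \<delta>: "\<delta> > 0" using sup by (simp add: \<delta>_def)
  show "1 + d / \<delta> > 0" using \<delta> d by (simp add: add_pos_nonneg)
  fix t :: real assume t: "t \<ge> 1"
  have "d * (exp (\<delta> * t) - 1) / \<delta> \<le> d * exp (\<delta> * t) / \<delta>"
    using \<delta> d by (intro divide_right_mono mult_left_mono) auto
  moreover have "1 \<le> exp (\<delta> * t)" using \<delta> t by simp
  moreover have "(1 + d / \<delta>) * exp (\<delta> * t) = exp (\<delta> * t) + d * exp (\<delta> * t) / \<delta>"
    by (simp add: algebra_simps)
  ultimately have "B t \<le> (1 + d / \<delta>) * exp (\<delta> * t)"
    using bound[OF t] unfolding \<delta>_def[symmetric] by linarith
  also have "\<dots> = htilde_fun (1 + d / \<delta>) \<alpha> S1 (S1 / \<alpha>) (S2 / (2 * \<alpha>)) \<eta> t"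
  proof -
    have "\<not> S2 / (2 * \<alpha>) < S1 / \<alpha>" "S1 / \<alpha> < S2 / (2 * \<alpha>)"
      "2 * \<alpha> * (S2 / (2 * \<alpha>) - S1 / \<alpha>) = \<delta>"
      using sup \<alpha> by (simp_all add: \<delta>_def field_simps)
    then show ?thesis unfolding htilde_fun_def h_fun_def by simp
  qed
  finally show "B t \<le> htilde_fun (1 + d / \<delta>) \<alpha> S1 (S1 / \<alpha>) (S2 / (2 * \<alpha>)) \<eta> t" .
qed

text \<open>In the critical case the bound is applied with \<open>\<delta> = 1/t\<close>, where it becomes linear in \<open>t\<close>.\<close>
lemma htilde_bound_critical:
  assumes \<eta>: "\<eta> > 0" and d: "d \<ge> 0" and crit: "S2 = 2 * S1"
    and bound: "\<And>t \<delta>. t \<ge> 1 \<Longrightarrow> \<delta> > 0 \<Longrightarrow> B t \<le> 1 + d * (exp (\<delta> * t) - 1) / \<delta>"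
  shows "\<exists>C>0. \<forall>t\<ge>1. B t \<le> htilde_fun C \<alpha> S1 (S1 / \<alpha>) (S2 / (2 * \<alpha>)) \<eta> t"
proof (intro exI conjI allI impI)
  define C where "C = (1 + 2 * d) * (1 + 1 / \<eta>)"
  show C: "C > 0" using d \<eta> by (simp add: C_def add_pos_nonneg)
  fix t :: real assume t: "t \<ge> 1"
  have "B t \<le> 1 + d * (exp 1 - 1) * t"
    using bound[OF t, of "1 / t"] t by simp
  also have "\<dots> \<le> (1 + 2 * d) * t"
  proof -
    have "exp (1::real) \<le> 3" by (rule exp_le)
    then have "d * (exp 1 - 1) * t \<le> d * 2 * t" using d t by (intro mult_right_mono mult_left_mono) auto
    then show ?thesis using t by (simp add: algebra_simps)
  qed
  also have "\<dots> \<le> htilde_fun C \<alpha> S1 (S1 / \<alpha>) (S2 / (2 * \<alpha>)) \<eta> t"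
  proof -
    have p: "0 \<le> 1 + 2 * d" using d by simp
    have Ct: "(1 + 2 * d) * t \<le> C * t" using p t \<eta> unfolding C_def
      by (intro mult_right_mono) (auto simp: field_simps)
    have "\<eta> * t \<le> exp (\<eta> * t)" using exp_ge_add_one_self[of "\<eta> * t"] by linarith
    then have "t \<le> exp (\<eta> * t) / \<eta>" using \<eta> by (simp add: field_simps)
    also have "\<dots> \<le> (1 + 1 / \<eta>) * exp (\<eta> * t)" using \<eta> by (simp add: field_simps)
    finally have "(1 + 2 * d) * t \<le> C * exp (\<eta> * t)"
      using p unfolding C_def by (simp add: mult_left_mono mult.assoc)
    moreover have "C * t \<le> C * (t * exp (- (2 * S1 + 1) * t))" if "2 * S1 < -1"
    proof -
      have "1 \<le> exp (- (2 * S1 + 1) * t)" using that t by (simp add: mult_nonpos_nonneg)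
      then show ?thesis using C t by simp
    qed
    moreover have "C * t \<le> C * t\<^sup>2" using C t by (simp add: power2_eq_square)
    moreover have "S2 / (2 * \<alpha>) = S1 / \<alpha>" using crit by simp
    ultimately show ?thesis using Ct unfolding htilde_fun_def h_fun_def by auto
  qed
  finally show "B t \<le> htilde_fun C \<alpha> S1 (S1 / \<alpha>) (S2 / (2 * \<alpha>)) \<eta> t" .
qed

lemma exists_htilde_bound:
  assumes \<alpha>: "\<alpha> > 0" and \<eta>: "\<eta> > 0" and d: "d \<ge> 0"
    and bound: "\<And>t \<delta>. t \<ge> 1 \<Longrightarrow> \<delta> \<ge> S2 - 2 * S1 \<Longrightarrow> \<delta> \<noteq> 0 \<Longrightarrow> B t \<le> 1 + d * (exp (\<delta> * t) - 1) / \<delta>"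
  shows "\<exists>C>0. \<forall>t\<ge>1. B t \<le> htilde_fun C \<alpha> S1 (S1 / \<alpha>) (S2 / (2 * \<alpha>)) \<eta> t"
proof -
  consider "S2 < 2 * S1" | "S2 > 2 * S1" | "S2 = 2 * S1" by linarith
  then show ?thesis
  proof cases
    case 1
    then show ?thesis by (intro htilde_bound_subcritical[OF \<alpha> d] bound) auto
  next
    case 2
    then show ?thesis by (intro htilde_bound_supercritical[OF \<alpha> d] bound) auto
  next
    case 3
    then show ?thesis by (intro htilde_bound_critical[OF \<eta> d] bound) auto
  qed
qed

section \<open>Independence and nonnegative integrals\<close>

lemma rv_events_Int_stable: "Int_stable (rv_events M N X)"
  unfolding Int_stable_def rv_events_def
proof safe
  fix A B assume "A \<in> sets N" "B \<in> sets N"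
  then show "\<exists>C. (X -` A \<inter> space M) \<inter> (X -` B \<inter> space M) = X -` C \<inter> space M \<and> C \<in> sets N"
    by (intro exI[of _ "A \<inter> B"]) auto
qed

lemma measurable_sigma_rv_events:
  assumes X: "X \<in> measurable M N" and sub: "rv_events M N X \<subseteq> G" and G: "G \<subseteq> Pow (space M)"
  shows "X \<in> measurable (sigma (space M) G) N"
proof (rule measurableI)
  fix x assume "x \<in> space (sigma (space M) G)"
  then show "X x \<in> space N" using X G by (auto simp: measurable_def space_measure_of_conv)
next
  fix A assume "A \<in> sets N"
  then have "X -` A \<inter> space M \<in> G" using sub unfolding rv_events_def by auto
  then show "X -` A \<inter> space (sigma (space M) G) \<in> sets (sigma (space M) G)"
    using G by (auto simp: sets_measure_of_conv space_measure_of_conv)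
qed

lemma measurable_from_sigma_events:
  assumes G: "G \<subseteq> sets M" and X: "X \<in> measurable (sigma (space M) G) N"
  shows "X \<in> measurable M N"
proof -
  have "G \<subseteq> Pow (space M)" using G sets.sets_into_space by auto
  then have "sets (sigma (space M) G) \<subseteq> sets M" "space (sigma (space M) G) = space M"
    using sets.sigma_sets_subset[OF G] by simp_all
  then show ?thesis using X measurable_mono[of N N "sigma (space M) G" M] by auto
qed

lemma (in prob_space) indep_vars_blocks:
  fixes F :: "'i \<Rightarrow> 'a set set" and B :: "'j \<Rightarrow> 'i set" and X :: "'j \<Rightarrow> 'a \<Rightarrow> ennreal"
  assumes ind: "indep_sets F K" and stable: "\<And>i. i \<in> K \<Longrightarrow> Int_stable (F i)"
    and BK: "\<And>j. j \<in> J \<Longrightarrow> B j \<subseteq> K" and disj: "disjoint_family_on B J"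
    and X: "\<And>j. j \<in> J \<Longrightarrow> X j \<in> borel_measurable (sigma (space M) (\<Union>i\<in>B j. F i))"
  shows "indep_vars (\<lambda>_. borel) X J"
proof -
  have events: "(\<Union>i\<in>B j. F i) \<subseteq> events" if "j \<in> J" for j
    using ind BK[OF that] unfolding indep_sets_def by blast
  then have Pow: "(\<Union>i\<in>B j. F i) \<subseteq> Pow (space M)" if "j \<in> J" for j
    using that sets.space_closed by blast
  have "indep_sets F (\<Union>j\<in>J. B j)" by (rule indep_sets_mono_index[OF _ ind]) (use BK in blast)
  then have blocks: "indep_sets (\<lambda>j. sigma_sets (space M) (\<Union>i\<in>B j. F i)) J"
    using indep_sets_collect_sigma[OF _ _ disj] stable BK by blast
  show ?thesis unfolding indep_vars_def2
  proof safe
    fix j assume j: "j \<in> J"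
    show "random_variable borel (X j)" by (rule measurable_from_sigma_events[OF events[OF j] X[OF j]])
  next
    show "indep_sets (\<lambda>j. {X j -` A \<inter> space M |A. A \<in> sets borel}) J"
    proof (rule indep_sets_mono_sets[OF blocks], safe)
      fix j and A :: "ennreal set" assume "j \<in> J" "A \<in> sets borel"
      then show "X j -` A \<inter> space M \<in> sigma_sets (space M) (\<Union>i\<in>B j. F i)"
        using measurable_sets[OF X] Pow by (simp add: sets_measure_of_conv space_measure_of_conv)
    qed
  qed
qed

lemma nn_integral_linear_comb:
  assumes "a \<ge> 0" "b \<ge> 0" "\<And>x. f x \<ge> 0" "\<And>x. g x \<ge> 0"
    and [measurable]: "f \<in> borel_measurable M" "g \<in> borel_measurable M"
  shows "(\<integral>\<^sup>+x. ennreal (a * f x + b * g x) \<partial>M)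
      = ennreal a * (\<integral>\<^sup>+x. ennreal (f x) \<partial>M) + ennreal b * (\<integral>\<^sup>+x. ennreal (g x) \<partial>M)"
  using assms by (simp add: ennreal_plus ennreal_mult nn_integral_add nn_integral_cmult)

lemma nn_integral_sum_sum_ennreal:
  assumes "finite J" "finite R"
    and nonneg: "\<And>j r \<omega>. j \<in> J \<Longrightarrow> r \<in> R \<Longrightarrow> f j r \<omega> \<ge> 0"
    and meas: "\<And>j r. j \<in> J \<Longrightarrow> r \<in> R \<Longrightarrow> f j r \<in> borel_measurable M"
  shows "(\<integral>\<^sup>+\<omega>. ennreal (\<Sum>j\<in>J. \<Sum>r\<in>R. f j r \<omega>) \<partial>M) = (\<Sum>j\<in>J. \<Sum>r\<in>R. \<integral>\<^sup>+\<omega>. ennreal (f j r \<omega>) \<partial>M)"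
proof -
  have "(\<integral>\<^sup>+\<omega>. ennreal (\<Sum>j\<in>J. \<Sum>r\<in>R. f j r \<omega>) \<partial>M) = (\<integral>\<^sup>+\<omega>. (\<Sum>j\<in>J. \<Sum>r\<in>R. ennreal (f j r \<omega>)) \<partial>M)"
    using nonneg by (intro nn_integral_cong) (simp add: sum_nonneg flip: sum_ennreal)
  also have "\<dots> = (\<Sum>j\<in>J. \<integral>\<^sup>+\<omega>. (\<Sum>r\<in>R. ennreal (f j r \<omega>)) \<partial>M)"
    using meas by (intro nn_integral_sum) auto
  also have "\<dots> = (\<Sum>j\<in>J. \<Sum>r\<in>R. \<integral>\<^sup>+\<omega>. ennreal (f j r \<omega>) \<partial>M)"
    using meas by (intro sum.cong refl nn_integral_sum) auto
  finally show ?thesis .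
qed

section \<open>The second moment of \<open>M\<^sub>n(\<alpha>)\<close>\<close>

definition split_gain :: "real \<Rightarrow> real \<times> real \<Rightarrow> real" where
  "split_gain s x = fst x powr s + snd x powr s"

definition split_var :: "(real \<times> real) measure \<Rightarrow> real \<Rightarrow> real" where
  "split_var D \<alpha> = (\<integral>x. (split_gain \<alpha> x - 1)\<^sup>2 \<partial>D)"

lemma split_gain_measurable[measurable]: "split_gain s \<in> borel_measurable borel"
proof -
  have "split_gain s \<in> borel_measurable (borel \<Otimes>\<^sub>M borel)" unfolding split_gain_def[abs_def] by measurable
  then show ?thesis by (simp add: borel_prod)
qed

lemma split_gain_nonneg: "split_gain s x \<ge> 0"
  unfolding split_gain_def by simp

lemma split_gain_double: "split_gain (2 * s) x = (fst x powr s)\<^sup>2 + (snd x powr s)\<^sup>2"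
  unfolding split_gain_def power2_eq_square powr_add[symmetric] mult_2 ..

lemma integral_split_gain: "(\<integral>x. split_gain s x \<partial>D) = S_fun D s + 1"
  unfolding S_fun_def split_gain_def by simp

lemma split_var_nonneg: "split_var D \<alpha> \<ge> 0"
  unfolding split_var_def by (simp add: integral_nonneg)

lemma S_fun_ge_minus_one: "S_fun D \<alpha> \<ge> -1"
  unfolding S_fun_def by (simp add: integral_nonneg)

text \<open>\<open>V\<close> stands for \<open>\<nu>\<^sub>t\<close> at one fixed time \<open>t\<close>.\<close>
locale split_process = prob_space M for M :: "'a measure" +
  fixes D :: "(real \<times> real) measure"
    and LR :: "nat \<Rightarrow> 'a \<Rightarrow> real \<times> real"
    and I :: "nat \<Rightarrow> 'a \<Rightarrow> nat"
    and V :: "'a \<Rightarrow> nat"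
    and \<alpha> :: real
  assumes D_nonneg: "AE x in D. fst x \<ge> 0 \<and> snd x \<ge> 0"
    and LR_rv: "\<And>n. n \<ge> 1 \<Longrightarrow> LR n \<in> borel_measurable M"
    and LR_law: "\<And>n. n \<ge> 1 \<Longrightarrow> distr M borel (LR n) = D"
    and I_rv: "\<And>n. n \<ge> 1 \<Longrightarrow> I n \<in> measurable M (count_space UNIV)"
    and I_law: "\<And>n k. n \<ge> 1 \<Longrightarrow>
       measure M {\<omega> \<in> space M. I n \<omega> = k} = (if k \<in> {1..n} then 1 / real n else 0)"
    and V_rv: "V \<in> measurable M (count_space UNIV)"
    and indep: "indep_sets
       (case_sum (\<lambda>n. rv_events M borel (LR n))
          (case_sum (\<lambda>n. rv_events M (count_space UNIV) (I n))
                    (\<lambda>_. rv_events M (count_space UNIV) V))) idx"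
    and moment: "integrable D (\<lambda>x. fst x powr (2 * \<alpha>) + snd x powr (2 * \<alpha>))"
begin

abbreviation basic_events :: "nat + nat + unit \<Rightarrow> 'a set set" where
  "basic_events \<equiv> case_sum (\<lambda>n. rv_events M borel (LR n))
    (case_sum (\<lambda>n. rv_events M (count_space UNIV) (I n)) (\<lambda>_. rv_events M (count_space UNIV) V))"

definition sigma_of :: "(nat + nat + unit) set \<Rightarrow> 'a measure" where
  "sigma_of B = sigma (space M) (\<Union>i\<in>B. basic_events i)"

definition past :: "nat \<Rightarrow> (nat + nat + unit) set" where
  "past n = Inl ` {1..<n} \<union> Inr ` Inl ` {1..<n}"

text \<open>\<open>LR\<close> and \<open>I\<close> altered on a null set so that every sample path is an admissible splitting.\<close>
definition LRc :: "nat \<Rightarrow> 'a \<Rightarrow> real \<times> real" where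
  "LRc k \<omega> = (max 0 (fst (LR k \<omega>)), max 0 (snd (LR k \<omega>)))"

definition Ic :: "nat \<Rightarrow> 'a \<Rightarrow> nat" where
  "Ic k \<omega> = (if I k \<omega> \<in> {1..k} then I k \<omega> else 1)"

definition weight :: "nat \<Rightarrow> nat \<Rightarrow> 'a \<Rightarrow> real" where
  "weight n j \<omega> = (beta (\<lambda>k. LRc k \<omega>) (\<lambda>k. Ic k \<omega>) n ! j) powr \<alpha>"

definition Msum :: "nat \<Rightarrow> 'a \<Rightarrow> real" where
  "Msum n \<omega> = Mn \<alpha> (\<lambda>k. LRc k \<omega>) (\<lambda>k. Ic k \<omega>) n"

definition Qsum :: "nat \<Rightarrow> 'a \<Rightarrow> real" where
  "Qsum n \<omega> = (\<Sum>j<n. (weight n j \<omega>)\<^sup>2)"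

lemma admissible_clamped: "admissible_split (\<lambda>k. LRc k \<omega>) (\<lambda>k. Ic k \<omega>)"
  unfolding admissible_split_def LRc_def Ic_def by auto

lemma Msum_eq_sum_weight: "Msum n \<omega> = (\<Sum>j<n. weight n j \<omega>)"
  unfolding Msum_def weight_def by (rule Mn_eq_sum_nth[OF admissible_clamped])

lemma Qsum_eq_sum_list: "Qsum n \<omega> = (\<Sum>x\<leftarrow>beta (\<lambda>k. LRc k \<omega>) (\<lambda>k. Ic k \<omega>) n. (x powr \<alpha>)\<^sup>2)"
  unfolding Qsum_def weight_def sum_list_map_eq_sum_nth length_beta[OF admissible_clamped] ..

lemma weight_nonneg: "weight n j \<omega> \<ge> 0"
  by (simp add: weight_def)

lemma weight_le_Msum: "j < n \<Longrightarrow> weight n j \<omega> \<le> Msum n \<omega>"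
  unfolding Msum_eq_sum_weight by (rule member_le_sum) (auto simp: weight_nonneg)

lemma sq_weight_le_Qsum: "j < n \<Longrightarrow> (weight n j \<omega>)\<^sup>2 \<le> Qsum n \<omega>"
  unfolding Qsum_def by (rule member_le_sum) auto

lemma Qsum_nonneg: "Qsum n \<omega> \<ge> 0"
  unfolding Qsum_def by (simp add: sum_nonneg)

lemma basic_events_subset_Pow: "(\<Union>i\<in>B. basic_events i) \<subseteq> Pow (space M)"
  by (auto simp: rv_events_def split: sum.splits)

lemma basic_events_Int_stable: "Int_stable (basic_events i)"
  by (cases i rule: sum.exhaust) (auto simp: rv_events_Int_stable split: sum.splits)

lemma basic_events_subset_events: "B \<subseteq> idx \<Longrightarrow> (\<Union>i\<in>B. basic_events i) \<subseteq> events"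
  using indep unfolding indep_sets_def by blast

lemma measurable_sigma_ofD: "B \<subseteq> idx \<Longrightarrow> f \<in> measurable (sigma_of B) N \<Longrightarrow> f \<in> measurable M N"
  unfolding sigma_of_def by (rule measurable_from_sigma_events[OF basic_events_subset_events])

lemma LRc_measurable: "k \<ge> 1 \<Longrightarrow> Inl k \<in> B \<Longrightarrow> LRc k \<in> borel_measurable (sigma_of B)"
proof -
  assume "k \<ge> 1" "Inl k \<in> B"
  then have "LR k \<in> sigma_of B \<rightarrow>\<^sub>M borel \<Otimes>\<^sub>M borel"
    unfolding sigma_of_def borel_prod
    by (intro measurable_sigma_rv_events[OF LR_rv _ basic_events_subset_Pow]) auto
  note this[measurable]
  have "LRc k \<in> sigma_of B \<rightarrow>\<^sub>M borel \<Otimes>\<^sub>M borel" unfolding LRc_def[abs_def] by measurable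
  then show ?thesis by (simp add: borel_prod)
qed

lemma Ic_measurable: "k \<ge> 1 \<Longrightarrow> Inr (Inl k) \<in> B \<Longrightarrow> Ic k \<in> measurable (sigma_of B) (count_space UNIV)"
proof -
  assume "k \<ge> 1" "Inr (Inl k) \<in> B"
  then have "I k \<in> measurable (sigma_of B) (count_space UNIV)"
    unfolding sigma_of_def by (intro measurable_sigma_rv_events[OF I_rv _ basic_events_subset_Pow]) auto
  from measurable_compose[OF this, of "\<lambda>x. if x \<in> {1..k} then x else 1"] show ?thesis
    unfolding Ic_def[abs_def] by simp
qed

lemma V_measurable: "Inr (Inr ()) \<in> B \<Longrightarrow> V \<in> measurable (sigma_of B) (count_space UNIV)"
  unfolding sigma_of_def by (rule measurable_sigma_rv_events[OF V_rv _ basic_events_subset_Pow]) auto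

lemma LRc_rv: "k \<ge> 1 \<Longrightarrow> LRc k \<in> borel_measurable M"
  by (rule measurable_sigma_ofD[of "{Inl k}"]) (auto simp: idx_def intro: LRc_measurable)

lemma Ic_rv: "k \<ge> 1 \<Longrightarrow> Ic k \<in> measurable M (count_space UNIV)"
  by (rule measurable_sigma_ofD[of "{Inr (Inl k)}"]) (auto simp: idx_def intro: Ic_measurable)

lemma past_subset_idx: "past n \<subseteq> idx"
  unfolding past_def idx_def by auto

lemma weight_measurable[measurable]: "weight n j \<in> borel_measurable (sigma_of (past n))"
proof -
  have "(\<lambda>\<omega>. beta (\<lambda>k. LRc k \<omega>) (\<lambda>k. Ic k \<omega>) n ! j) \<in> borel_measurable (sigma_of (past n))"
    by (rule measurable_beta_nth[OF admissible_clamped]) (auto simp: past_def LRc_measurable Ic_measurable)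
  note this[measurable]
  show ?thesis unfolding weight_def[abs_def] by measurable
qed

lemma Msum_measurable[measurable]: "Msum n \<in> borel_measurable (sigma_of (past n))"
  unfolding Msum_eq_sum_weight[abs_def] by measurable

lemma Qsum_measurable[measurable]: "Qsum n \<in> borel_measurable (sigma_of (past n))"
  unfolding Qsum_def[abs_def] by measurable

lemma AE_LR_nonneg: "k \<ge> 1 \<Longrightarrow> AE \<omega> in M. fst (LR k \<omega>) \<ge> 0 \<and> snd (LR k \<omega>) \<ge> 0"
proof -
  assume k: "k \<ge> 1"
  have "(\<lambda>x::real \<times> real. fst x \<ge> 0 \<and> snd x \<ge> 0) \<in> measurable (borel \<Otimes>\<^sub>M borel) (count_space UNIV)"
    by measurable
  then have "{x \<in> space borel. fst x \<ge> 0 \<and> snd x \<ge> (0::real)} \<in> sets (borel :: (real \<times> real) measure)"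
    by (simp add: borel_prod pred_def)
  moreover have "AE x in distr M borel (LR k). fst x \<ge> 0 \<and> snd x \<ge> 0"
    unfolding LR_law[OF k] by (fact D_nonneg)
  ultimately show ?thesis by (subst (asm) AE_distr_iff[OF LR_rv[OF k]])
qed

lemma AE_I_range: "k \<ge> 1 \<Longrightarrow> AE \<omega> in M. I k \<omega> \<in> {1..k}"
proof -
  assume k: "k \<ge> 1"
  have "AE \<omega> in M. I k \<omega> \<noteq> j" if j: "j \<notin> {1..k}" for j
  proof -
    have S: "{\<omega> \<in> space M. I k \<omega> = j} \<in> sets M"
      using I_rv[OF k] by (simp add: pred_def[symmetric])
    have "emeasure M {\<omega> \<in> space M. I k \<omega> = j} = 0"
      using S I_law[OF k] j by (simp add: emeasure_eq_measure)
    then show ?thesis using S by (subst AE_iff_measurable[OF S]) auto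
  qed
  then have "AE \<omega> in M. \<forall>j. j \<notin> {1..k} \<longrightarrow> I k \<omega> \<noteq> j"
    by (subst AE_all_countable) auto
  then show ?thesis by eventually_elim auto
qed

lemma AE_clamped_eq: "AE \<omega> in M. \<forall>k\<ge>1. LRc k \<omega> = LR k \<omega> \<and> Ic k \<omega> = I k \<omega>"
proof (subst AE_all_countable, intro allI)
  fix k :: nat
  show "AE \<omega> in M. k \<ge> 1 \<longrightarrow> LRc k \<omega> = LR k \<omega> \<and> Ic k \<omega> = I k \<omega>"
  proof (cases "k \<ge> 1")
    case True
    show ?thesis using AE_LR_nonneg[OF True] AE_I_range[OF True]
      by eventually_elim (auto simp: LRc_def Ic_def prod_eq_iff)
  qed simp
qed

lemma AE_Msum_eq_Mn: "AE \<omega> in M. \<forall>n. Msum n \<omega> = Mn \<alpha> (\<lambda>k. LR k \<omega>) (\<lambda>k. I k \<omega>) n"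
  using AE_clamped_eq
proof eventually_elim
  case (elim \<omega>)
  then have "beta (\<lambda>k. LRc k \<omega>) (\<lambda>k. Ic k \<omega>) n = beta (\<lambda>k. LR k \<omega>) (\<lambda>k. I k \<omega>) n" for n
    by (intro beta_cong) auto
  then show ?case by (simp add: Msum_def Mn_def)
qed

lemma nn_integral_LRc:
  assumes n: "n \<ge> 1" and h: "h \<in> borel_measurable borel" "\<And>x. h x \<ge> 0" "integrable D h"
  shows "(\<integral>\<^sup>+\<omega>. ennreal (h (LRc n \<omega>)) \<partial>M) = ennreal (\<integral>x. h x \<partial>D)"
proof -
  define clamp :: "real \<times> real \<Rightarrow> real \<times> real" where "clamp x = (max 0 (fst x), max 0 (snd x))" for x
  have "clamp \<in> (borel \<Otimes>\<^sub>M borel) \<rightarrow>\<^sub>M (borel \<Otimes>\<^sub>M borel)" unfolding clamp_def[abs_def] by measurable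
  then have clamp_meas: "clamp \<in> borel_measurable borel" by (simp add: borel_prod)
  have "(\<integral>\<^sup>+\<omega>. ennreal (h (LRc n \<omega>)) \<partial>M) = (\<integral>\<^sup>+\<omega>. ennreal (h (clamp (LR n \<omega>))) \<partial>M)"
    by (simp add: LRc_def clamp_def)
  also have "\<dots> = (\<integral>\<^sup>+x. ennreal (h (clamp x)) \<partial>distr M borel (LR n))"
    using clamp_meas h LR_rv[OF n] by (subst nn_integral_distr) auto
  also have "\<dots> = (\<integral>\<^sup>+x. ennreal (h x) \<partial>D)"
    unfolding LR_law[OF n] using D_nonneg by (intro nn_integral_cong_AE) (auto simp: clamp_def)
  also have "\<dots> = ennreal (\<integral>x. h x \<partial>D)"
    using h by (intro nn_integral_eq_integral) auto
  finally show ?thesis .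
qed

lemma nn_integral_Ic_eq:
  assumes n: "n \<ge> 1" and j: "j \<in> {1..n}"
  shows "(\<integral>\<^sup>+\<omega>. ennreal (if Ic n \<omega> = j then 1 else 0) \<partial>M) = ennreal (1 / real n)"
proof -
  have S: "{\<omega> \<in> space M. I n \<omega> = j} \<in> sets M"
    using I_rv[OF n] by (simp add: pred_def[symmetric])
  have "(\<integral>\<^sup>+\<omega>. ennreal (if Ic n \<omega> = j then 1 else 0) \<partial>M)
     = (\<integral>\<^sup>+\<omega>. indicator {\<omega> \<in> space M. I n \<omega> = j} \<omega> \<partial>M)"
    using AE_clamped_eq n by (intro nn_integral_cong_AE) (auto elim!: eventually_mono simp: indicator_def)
  also have "\<dots> = ennreal (1 / real n)"
    using S I_law[OF n, of j] j by (simp add: emeasure_eq_measure)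
  finally show ?thesis .
qed

lemma nn_integral_prod_blocks:
  fixes X :: "'j \<Rightarrow> 'a \<Rightarrow> ennreal"
  assumes "finite J" and B: "\<And>j. j \<in> J \<Longrightarrow> B j \<subseteq> idx" and disj: "disjoint_family_on B J"
    and X: "\<And>j. j \<in> J \<Longrightarrow> X j \<in> borel_measurable (sigma_of (B j))"
  shows "(\<integral>\<^sup>+\<omega>. (\<Prod>j\<in>J. X j \<omega>) \<partial>M) = (\<Prod>j\<in>J. \<integral>\<^sup>+\<omega>. X j \<omega> \<partial>M)"
proof (rule indep_vars_nn_integral[OF \<open>finite J\<close>])
  show "indep_vars (\<lambda>_. borel) X J"
    using X unfolding sigma_of_def
    by (intro indep_vars_blocks[OF indep basic_events_Int_stable B disj])
qed simp

lemma nn_integral_split_factor: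
  assumes n: "n \<ge> 1" and j: "j < n"
    and U: "U \<in> borel_measurable (sigma_of (past n))" "\<And>\<omega>. U \<omega> \<ge> 0"
    and W: "W \<in> borel_measurable borel" "\<And>x. W x \<ge> 0" "integrable D W"
  shows "(\<integral>\<^sup>+\<omega>. ennreal (U \<omega> * (if Ic n \<omega> = Suc j then 1 else 0) * W (LRc n \<omega>)) \<partial>M)
       = ennreal (1 / real n) * ennreal (\<integral>x. W x \<partial>D) * (\<integral>\<^sup>+\<omega>. ennreal (U \<omega>) \<partial>M)"
proof -
  define X :: "nat \<Rightarrow> 'a \<Rightarrow> ennreal" where
    "X i = (if i = 0 then (\<lambda>\<omega>. ennreal (U \<omega>))
      else if i = 1 then (\<lambda>\<omega>. ennreal (if Ic n \<omega> = Suc j then 1 else 0))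
      else (\<lambda>\<omega>. ennreal (W (LRc n \<omega>))))" for i
  define B :: "nat \<Rightarrow> (nat + nat + unit) set" where
    "B i = (if i = 0 then past n else if i = 1 then {Inr (Inl n)} else {Inl n})" for i
  have "(\<integral>\<^sup>+\<omega>. (\<Prod>i\<in>{0,1,2}. X i \<omega>) \<partial>M) = (\<Prod>i\<in>{0,1,2}. \<integral>\<^sup>+\<omega>. X i \<omega> \<partial>M)"
  proof (rule nn_integral_prod_blocks)
    show "\<And>i. i \<in> {0,1,2} \<Longrightarrow> B i \<subseteq> idx"
      using n past_subset_idx by (auto simp: B_def idx_def)
    show "disjoint_family_on B {0,1,2}"
      by (auto simp: disjoint_family_on_def B_def past_def)
    have [measurable]: "Ic n \<in> measurable (sigma_of {Inr (Inl n)}) (count_space UNIV)"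
      "LRc n \<in> borel_measurable (sigma_of {Inl n})" "W \<in> borel_measurable borel"
      using n W(1) by (auto intro: Ic_measurable LRc_measurable)
    show "X i \<in> borel_measurable (sigma_of (B i))" if "i \<in> {0,1,2}" for i
      using that U(1) by (auto simp: X_def B_def)
  qed simp
  moreover have "ennreal (U \<omega> * (if Ic n \<omega> = Suc j then 1 else 0) * W (LRc n \<omega>)) = (\<Prod>i\<in>{0,1,2}. X i \<omega>)" for \<omega>
    using U(2) W(2) by (simp add: X_def ennreal_mult)
  ultimately show ?thesis
    using nn_integral_LRc[OF n W] nn_integral_Ic_eq[OF n, of "Suc j"] j by (simp add: X_def mult_ac)
qed

lemma nn_integral_split_step:
  fixes U :: "nat \<Rightarrow> nat \<Rightarrow> 'a \<Rightarrow> real" and W :: "nat \<Rightarrow> real \<times> real \<Rightarrow> real"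
  assumes n: "n \<ge> 1" and R: "finite R"
    and U: "\<And>r j. r \<in> R \<Longrightarrow> j < n \<Longrightarrow> U r j \<in> borel_measurable (sigma_of (past n))"
      "\<And>r j \<omega>. r \<in> R \<Longrightarrow> j < n \<Longrightarrow> U r j \<omega> \<ge> 0"
    and W: "\<And>r. r \<in> R \<Longrightarrow> W r \<in> borel_measurable borel" "\<And>r x. r \<in> R \<Longrightarrow> W r x \<ge> 0"
      "\<And>r. r \<in> R \<Longrightarrow> integrable D (W r)"
  shows "(\<integral>\<^sup>+\<omega>. ennreal (\<Sum>j<n. \<Sum>r\<in>R. U r j \<omega> * (if Ic n \<omega> = Suc j then 1 else 0) * W r (LRc n \<omega>)) \<partial>M)
     = ennreal (1 / real n) * (\<integral>\<^sup>+\<omega>. ennreal (\<Sum>j<n. \<Sum>r\<in>R. (\<integral>x. W r x \<partial>D) * U r j \<omega>) \<partial>M)"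
proof -
  have [measurable]: "Ic n \<in> measurable M (count_space UNIV)" "LRc n \<in> borel_measurable M"
    using n by (auto intro: Ic_rv LRc_rv)
  have UM[measurable]: "U r j \<in> borel_measurable M" if "r \<in> R" "j < n" for r j
    using measurable_sigma_ofD[OF past_subset_idx U(1)[OF that]] .
  have [measurable]: "W r \<in> borel_measurable borel" if "r \<in> R" for r
    using W(1)[OF that] .
  have EW: "(\<integral>x. W r x \<partial>D) \<ge> 0" if "r \<in> R" for r
    using W(2)[OF that] by (simp add: integral_nonneg)
  have "(\<integral>\<^sup>+\<omega>. ennreal (\<Sum>j<n. \<Sum>r\<in>R. U r j \<omega> * (if Ic n \<omega> = Suc j then 1 else 0) * W r (LRc n \<omega>)) \<partial>M)
      = (\<Sum>j<n. \<Sum>r\<in>R. ennreal (1 / real n) * ennreal (\<integral>x. W r x \<partial>D) * (\<integral>\<^sup>+\<omega>. ennreal (U r j \<omega>) \<partial>M))"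
    using R U(2) W(2) UM
    by (subst nn_integral_sum_sum_ennreal)
       (auto intro!: sum.cong nn_integral_split_factor[OF n] U W simp: measurable_If)
  also have "\<dots> = ennreal (1 / real n) * (\<Sum>j<n. \<Sum>r\<in>R. \<integral>\<^sup>+\<omega>. ennreal ((\<integral>x. W r x \<partial>D) * U r j \<omega>) \<partial>M)"
  proof -
    have "(\<integral>\<^sup>+\<omega>. ennreal ((\<integral>x. W r x \<partial>D) * U r j \<omega>) \<partial>M)
        = ennreal (\<integral>x. W r x \<partial>D) * (\<integral>\<^sup>+\<omega>. ennreal (U r j \<omega>) \<partial>M)" if "r \<in> R" "j < n" for r j
      using EW[OF that(1)] U(2)[OF that] UM[OF that] by (simp add: ennreal_mult nn_integral_cmult)
    then show ?thesis by (simp add: sum_distrib_left mult.assoc)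
  qed
  also have "\<dots> = ennreal (1 / real n) * (\<integral>\<^sup>+\<omega>. ennreal (\<Sum>j<n. \<Sum>r\<in>R. (\<integral>x. W r x \<partial>D) * U r j \<omega>) \<partial>M)"
    using R EW U(2) UM by (subst nn_integral_sum_sum_ennreal) auto
  finally show ?thesis .
qed

lemma D_prob: "prob_space D"
  using prob_space_distr[OF LR_rv[of 1]] LR_law[of 1] by simp

lemma sets_D: "sets D = sets borel"
  by (metis LR_law le_refl sets_distr)

lemma integrable_split_gain_double: "integrable D (split_gain (2 * \<alpha>))"
  using moment unfolding split_gain_def .

lemma integrable_split_gain_sq: "integrable D (\<lambda>x. (split_gain \<alpha> x)\<^sup>2)"
proof (rule Bochner_Integration.integrable_bound[OF integrable_mult_right[OF integrable_split_gain_double, of 2]])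
  show "(\<lambda>x. (split_gain \<alpha> x)\<^sup>2) \<in> borel_measurable D" using sets_D by (simp cong: measurable_cong_sets)
  have "(u + v)\<^sup>2 \<le> 2 * (u\<^sup>2 + v\<^sup>2)" for u v :: real
    using sum_power2_ge_zero[of "u - v" 0] by (simp add: power2_eq_square algebra_simps)
  then show "AE x in D. norm ((split_gain \<alpha> x)\<^sup>2) \<le> norm (2 * split_gain (2 * \<alpha>) x)"
    unfolding split_gain_double by (simp add: split_gain_def)
qed

lemma integrable_split_gain: "integrable D (split_gain \<alpha>)"
proof (rule Bochner_Integration.integrable_bound)
  interpret D: prob_space D by (rule D_prob)
  show "integrable D (\<lambda>x. 1 + (split_gain \<alpha> x)\<^sup>2)" using integrable_split_gain_sq by simp
  show "split_gain \<alpha> \<in> borel_measurable D" using sets_D by (simp cong: measurable_cong_sets)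
  have "u \<le> 1 + u\<^sup>2" if "u \<ge> 0" for u :: real
    using that sum_power2_ge_zero[of "u - 1" 0] by (simp add: power2_eq_square algebra_simps)
  then show "AE x in D. norm (split_gain \<alpha> x) \<le> norm (1 + (split_gain \<alpha> x)\<^sup>2)"
    using split_gain_nonneg by simp
qed

lemma integral_split_gain_sq: "(\<integral>x. (split_gain \<alpha> x)\<^sup>2 \<partial>D) = split_var D \<alpha> + 2 * S_fun D \<alpha> + 1"
proof -
  interpret D: prob_space D by (rule D_prob)
  have sq: "(u - 1)\<^sup>2 = u\<^sup>2 - 2 * u + 1" for u :: real
    by (simp add: power2_eq_square algebra_simps)
  have "split_var D \<alpha> = (\<integral>x. (split_gain \<alpha> x)\<^sup>2 - 2 * split_gain \<alpha> x + 1 \<partial>D)"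
    unfolding split_var_def sq ..
  also have "\<dots> = (\<integral>x. (split_gain \<alpha> x)\<^sup>2 \<partial>D) - 2 * (\<integral>x. split_gain \<alpha> x \<partial>D) + 1"
    using integrable_split_gain integrable_split_gain_sq by (simp add: D.prob_space)
  finally show ?thesis by (simp add: integral_split_gain)
qed

lemma S_fun_split_var_nonneg: "1 + 2 * S_fun D \<alpha> + split_var D \<alpha> \<ge> 0"
proof -
  have "(\<integral>x. (split_gain \<alpha> x)\<^sup>2 \<partial>D) \<ge> 0" by (simp add: integral_nonneg)
  then show ?thesis using integral_split_gain_sq by simp
qed

lemma Ic_range: "n \<ge> 1 \<Longrightarrow> Ic n \<omega> \<in> {1..n}"
  using admissible_splitD[OF admissible_clamped] by blast

lemma Msum_Suc:
  assumes "n \<ge> 1"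
  shows "Msum (Suc n) \<omega> = Msum n \<omega> + (split_gain \<alpha> (LRc n \<omega>) - 1) * weight n (Ic n \<omega> - 1) \<omega>"
  unfolding Msum_def weight_def split_gain_def Mn_Suc[OF admissible_clamped assms]
  by (simp add: left_diff_distrib)

lemma Qsum_Suc:
  assumes "n \<ge> 1"
  shows "Qsum (Suc n) \<omega> = Qsum n \<omega> + (split_gain (2 * \<alpha>) (LRc n \<omega>) - 1) * (weight n (Ic n \<omega> - 1) \<omega>)\<^sup>2"
  unfolding Qsum_eq_sum_list weight_def split_gain_double
    sum_list_sq_powr_beta_Suc[OF admissible_clamped assms]
  by (simp add: left_diff_distrib)

lemma Msum_1: "Msum (Suc 0) \<omega> = 1" and Qsum_1: "Qsum (Suc 0) \<omega> = 1"
  by (simp_all add: Msum_def Mn_def Qsum_def weight_def)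

lemma Msum_rv: "Msum n \<in> borel_measurable M"
  using measurable_sigma_ofD[OF past_subset_idx Msum_measurable] .

lemma Qsum_rv: "Qsum n \<in> borel_measurable M"
  using measurable_sigma_ofD[OF past_subset_idx Qsum_measurable] .

lemma nn_integral_Qsum_Suc:
  assumes n: "n \<ge> 1"
  shows "(\<integral>\<^sup>+\<omega>. ennreal (Qsum (Suc n) \<omega>) \<partial>M)
    = ennreal (1 / real n) * (\<integral>\<^sup>+\<omega>. ennreal ((real n + S_fun D (2 * \<alpha>)) * Qsum n \<omega>) \<partial>M)"
proof -
  interpret D: prob_space D by (rule D_prob)
  define U :: "nat \<Rightarrow> nat \<Rightarrow> 'a \<Rightarrow> real" where
    "U r j \<omega> = (if r = 0 then Qsum n \<omega> - (weight n j \<omega>)\<^sup>2 else (weight n j \<omega>)\<^sup>2)" for r j \<omega>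
  define W :: "nat \<Rightarrow> real \<times> real \<Rightarrow> real" where
    "W r = (if r = 0 then (\<lambda>_. 1) else split_gain (2 * \<alpha>))" for r
  have decomp: "Qsum (Suc n) \<omega>
      = (\<Sum>j<n. \<Sum>r\<in>{0,1}. U r j \<omega> * (if Ic n \<omega> = Suc j then 1 else 0) * W r (LRc n \<omega>))" for \<omega>
  proof -
    have "Qsum (Suc n) \<omega> = (\<Sum>j<n. if Ic n \<omega> = Suc j
        then Qsum n \<omega> + (split_gain (2 * \<alpha>) (LRc n \<omega>) - 1) * (weight n j \<omega>)\<^sup>2 else 0)"
      using sum_pick_index[OF Ic_range[OF n],
          of "\<lambda>j. Qsum n \<omega> + (split_gain (2 * \<alpha>) (LRc n \<omega>) - 1) * (weight n j \<omega>)\<^sup>2"]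
      by (simp add: Qsum_Suc[OF n])
    also have "\<dots> = (\<Sum>j<n. \<Sum>r\<in>{0,1}. U r j \<omega> * (if Ic n \<omega> = Suc j then 1 else 0) * W r (LRc n \<omega>))"
      by (intro sum.cong refl) (simp add: U_def W_def algebra_simps)
    finally show ?thesis .
  qed
  have mean: "(\<Sum>j<n. \<Sum>r\<in>{0,1}. (\<integral>x. W r x \<partial>D) * U r j \<omega>) = (real n + S_fun D (2 * \<alpha>)) * Qsum n \<omega>"
    for \<omega>
  proof -
    have "(\<Sum>j<n. \<Sum>r\<in>{0,1}. (\<integral>x. W r x \<partial>D) * U r j \<omega>)
        = (\<Sum>j<n. Qsum n \<omega> + S_fun D (2 * \<alpha>) * (weight n j \<omega>)\<^sup>2)"
      by (simp add: U_def W_def integral_split_gain D.prob_space algebra_simps)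
    also have "\<dots> = (real n + S_fun D (2 * \<alpha>)) * Qsum n \<omega>"
      by (simp add: sum.distrib Qsum_def[of n] algebra_simps flip: sum_distrib_left)
    finally show ?thesis .
  qed
  show ?thesis unfolding decomp
  proof (rule nn_integral_split_step[OF n, of "{0,1}" U W, unfolded mean])
    show "\<And>r j \<omega>. r \<in> {0,1} \<Longrightarrow> j < n \<Longrightarrow> U r j \<omega> \<ge> 0"
      using sq_weight_le_Qsum by (auto simp: U_def)
    show "\<And>r j. r \<in> {0,1} \<Longrightarrow> j < n \<Longrightarrow> U r j \<in> borel_measurable (sigma_of (past n))"
      unfolding U_def[abs_def] by auto
    show "\<And>r x. r \<in> {0,1} \<Longrightarrow> W r x \<ge> 0" using split_gain_nonneg by (auto simp: W_def)
    show "\<And>r. r \<in> {0,1} \<Longrightarrow> integrable D (W r)"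
      using integrable_split_gain_double by (auto simp: W_def)
  qed (auto simp: W_def)
qed

lemma nn_integral_Msum_Suc_sq:
  assumes n: "n \<ge> 1"
  shows "(\<integral>\<^sup>+\<omega>. ennreal ((Msum (Suc n) \<omega>)\<^sup>2) \<partial>M) = ennreal (1 / real n) *
    (\<integral>\<^sup>+\<omega>. ennreal ((real n + 2 * S_fun D \<alpha>) * (Msum n \<omega>)\<^sup>2 + split_var D \<alpha> * Qsum n \<omega>) \<partial>M)"
proof -
  interpret D: prob_space D by (rule D_prob)
  define U :: "nat \<Rightarrow> nat \<Rightarrow> 'a \<Rightarrow> real" where
    "U r j \<omega> = (if r = 0 then (Msum n \<omega> - weight n j \<omega>)\<^sup>2
      else if r = 1 then 2 * (Msum n \<omega> - weight n j \<omega>) * weight n j \<omega> else (weight n j \<omega>)\<^sup>2)" for r j \<omega>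
  define W :: "nat \<Rightarrow> real \<times> real \<Rightarrow> real" where
    "W r = (if r = 0 then (\<lambda>_. 1) else if r = 1 then split_gain \<alpha> else (\<lambda>x. (split_gain \<alpha> x)\<^sup>2))" for r
  have decomp: "(Msum (Suc n) \<omega>)\<^sup>2
      = (\<Sum>j<n. \<Sum>r\<in>{0,1,2}. U r j \<omega> * (if Ic n \<omega> = Suc j then 1 else 0) * W r (LRc n \<omega>))" for \<omega>
  proof -
    have "(Msum (Suc n) \<omega>)\<^sup>2 = (\<Sum>j<n. if Ic n \<omega> = Suc j
        then (Msum n \<omega> + (split_gain \<alpha> (LRc n \<omega>) - 1) * weight n j \<omega>)\<^sup>2 else 0)"
      using sum_pick_index[OF Ic_range[OF n],
          of "\<lambda>j. (Msum n \<omega> + (split_gain \<alpha> (LRc n \<omega>) - 1) * weight n j \<omega>)\<^sup>2"]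
      by (simp add: Msum_Suc[OF n])
    also have "\<dots> = (\<Sum>j<n. \<Sum>r\<in>{0,1,2}. U r j \<omega> * (if Ic n \<omega> = Suc j then 1 else 0) * W r (LRc n \<omega>))"
      by (intro sum.cong refl) (simp add: U_def W_def power2_eq_square algebra_simps)
    finally show ?thesis .
  qed
  have mean: "(\<Sum>j<n. \<Sum>r\<in>{0,1,2}. (\<integral>x. W r x \<partial>D) * U r j \<omega>)
      = (real n + 2 * S_fun D \<alpha>) * (Msum n \<omega>)\<^sup>2 + split_var D \<alpha> * Qsum n \<omega>" for \<omega>
  proof -
    let ?a = "S_fun D \<alpha> + 1" and ?e = "split_var D \<alpha> + 2 * S_fun D \<alpha> + 1"
    have "(\<Sum>j<n. \<Sum>r\<in>{0,1,2}. (\<integral>x. W r x \<partial>D) * U r j \<omega>)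
        = (\<Sum>j<n. ((\<Sum>i<n. weight n i \<omega>) - weight n j \<omega>)\<^sup>2
            + 2 * ?a * (((\<Sum>i<n. weight n i \<omega>) - weight n j \<omega>) * weight n j \<omega>) + ?e * (weight n j \<omega>)\<^sup>2)"
      by (simp add: U_def W_def D.prob_space integral_split_gain integral_split_gain_sq
          Msum_eq_sum_weight algebra_simps)
    also have "\<dots> = (real n + 2 * S_fun D \<alpha>) * (Msum n \<omega>)\<^sup>2 + split_var D \<alpha> * Qsum n \<omega>"
      unfolding sum_leave_one_out_identity Msum_eq_sum_weight Qsum_def by (simp add: algebra_simps)
    finally show ?thesis .
  qed
  show ?thesis unfolding decomp
  proof (rule nn_integral_split_step[OF n, of "{0,1,2}" U W, unfolded mean])
    show "\<And>r j \<omega>. r \<in> {0,1,2} \<Longrightarrow> j < n \<Longrightarrow> U r j \<omega> \<ge> 0"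
      using weight_le_Msum weight_nonneg by (auto simp: U_def)
    show "\<And>r j. r \<in> {0,1,2} \<Longrightarrow> j < n \<Longrightarrow> U r j \<in> borel_measurable (sigma_of (past n))"
      unfolding U_def[abs_def] by auto
    show "\<And>r x. r \<in> {0,1,2} \<Longrightarrow> W r x \<ge> 0" using split_gain_nonneg by (auto simp: W_def)
    show "\<And>r. r \<in> {0,1,2} \<Longrightarrow> integrable D (W r)"
      using integrable_split_gain integrable_split_gain_sq by (auto simp: W_def)
  qed (auto simp: W_def)
qed

lemma nn_integral_Qsum:
  "n \<ge> 1 \<Longrightarrow> (\<integral>\<^sup>+\<omega>. ennreal (Qsum n \<omega>) \<partial>M) = ennreal (yule_factor (S_fun D (2 * \<alpha>)) n)"
proof (induction n rule: dec_induct)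
  case base
  then show ?case by (simp add: Qsum_1 emeasure_space_1)
next
  case (step n)
  let ?c = "real n + S_fun D (2 * \<alpha>)"
  have c: "?c \<ge> 0" using step(1) S_fun_ge_minus_one[of D "2 * \<alpha>"] by simp
  have "(\<integral>\<^sup>+\<omega>. ennreal (Qsum (Suc n) \<omega>) \<partial>M) = ennreal (1 / real n) * (ennreal ?c * ennreal (yule_factor (S_fun D (2 * \<alpha>)) n))"
    using nn_integral_linear_comb[OF c order_refl Qsum_nonneg Qsum_nonneg Qsum_rv Qsum_rv]
    by (simp add: nn_integral_Qsum_Suc[OF step(1)] step(3))
  also have "\<dots> = ennreal (1 / real n * (?c * yule_factor (S_fun D (2 * \<alpha>)) n))"
    using c yule_factor_nonneg[OF S_fun_ge_minus_one step(1)]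
    by (simp only: ennreal_mult mult_nonneg_nonneg of_nat_0_le_iff divide_nonneg_nonneg zero_le_one)
  also have "\<dots> = ennreal (yule_factor (S_fun D (2 * \<alpha>)) (Suc n))"
    using step(1) by (simp add: yule_factor_Suc field_simps)
  finally show ?case .
qed

lemma nn_integral_Msum_sq:
  "n \<ge> 1 \<Longrightarrow> (\<integral>\<^sup>+\<omega>. ennreal ((Msum n \<omega>)\<^sup>2) \<partial>M)
    = ennreal (moment_seq (2 * S_fun D \<alpha>) (split_var D \<alpha>) (S_fun D (2 * \<alpha>)) n)"
proof (induction n rule: dec_induct)
  case base
  then show ?case by (simp add: Msum_1 emeasure_space_1)
next
  case (step n)
  let ?A = "moment_seq (2 * S_fun D \<alpha>) (split_var D \<alpha>) (S_fun D (2 * \<alpha>))"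
  let ?c = "real n + 2 * S_fun D \<alpha>" and ?d = "split_var D \<alpha>" and ?P = "yule_factor (S_fun D (2 * \<alpha>)) n"
  have A: "?A n \<ge> 0"
    using moment_seq_nonneg S_fun_ge_minus_one split_var_nonneg S_fun_split_var_nonneg by simp
  have P: "?P \<ge> 0" using yule_factor_nonneg[OF S_fun_ge_minus_one step(1)] .
  have rec: "?A (Suc n) = 1 / real n * (?c * ?A n + ?d * ?P)"
    using step(1) by (simp add: moment_seq_Suc field_simps)
  show ?case
  proof (cases "n = 1")
    case True
    have "(\<integral>\<^sup>+\<omega>. ennreal ((Msum (Suc n) \<omega>)\<^sup>2) \<partial>M) = ennreal (1 / real n) * ennreal (?c + ?d)"
      unfolding nn_integral_Msum_Suc_sq[OF step(1)] using True
      by (simp add: Msum_1 Qsum_1 emeasure_space_1)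
    also have "\<dots> = ennreal (?A (Suc n))" using True rec by simp
    finally show ?thesis .
  next
    case False
    then have c: "?c \<ge> 0" using step(1) S_fun_ge_minus_one[of D \<alpha>] by simp
    have "(\<integral>\<^sup>+\<omega>. ennreal ((Msum (Suc n) \<omega>)\<^sup>2) \<partial>M)
        = ennreal (1 / real n) * (ennreal ?c * ennreal (?A n) + ennreal ?d * ennreal ?P)"
      using nn_integral_linear_comb[OF c split_var_nonneg _ Qsum_nonneg _ Qsum_rv] Msum_rv
      by (simp add: nn_integral_Msum_Suc_sq[OF step(1)] step(3) nn_integral_Qsum[OF step(1)])
    also have "\<dots> = ennreal (?A (Suc n))"
      using c A P split_var_nonneg[of D \<alpha>] unfolding rec
      by (simp only: ennreal_mult ennreal_plus mult_nonneg_nonneg add_nonneg_nonneg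
          of_nat_0_le_iff divide_nonneg_nonneg zero_le_one)
    finally show ?thesis .
  qed
qed

lemma nn_integral_indicator_V_mult:
  fixes U :: "'a \<Rightarrow> ennreal"
  assumes U: "U \<in> borel_measurable (sigma_of (past n))"
  shows "(\<integral>\<^sup>+\<omega>. U \<omega> * indicator {\<omega> \<in> space M. V \<omega> = n} \<omega> \<partial>M)
    = (\<integral>\<^sup>+\<omega>. U \<omega> \<partial>M) * ennreal (measure M {\<omega> \<in> space M. V \<omega> = n})"
proof -
  define X :: "nat \<Rightarrow> 'a \<Rightarrow> ennreal" where
    "X i = (if i = 0 then U else indicator {\<omega> \<in> space M. V \<omega> = n})" for i
  define B :: "nat \<Rightarrow> (nat + nat + unit) set" where
    "B i = (if i = 0 then past n else {Inr (Inr ())})" for i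
  have "(\<integral>\<^sup>+\<omega>. (\<Prod>i\<in>{0,1}. X i \<omega>) \<partial>M) = (\<Prod>i\<in>{0,1}. \<integral>\<^sup>+\<omega>. X i \<omega> \<partial>M)"
  proof (rule nn_integral_prod_blocks)
    show "\<And>i. i \<in> {0,1} \<Longrightarrow> B i \<subseteq> idx" using past_subset_idx by (auto simp: B_def idx_def)
    show "disjoint_family_on B {0,1}" by (auto simp: disjoint_family_on_def B_def past_def)
    have [measurable]: "V \<in> measurable (sigma_of {Inr (Inr ())}) (count_space UNIV)"
      by (rule V_measurable) simp
    have "{\<omega> \<in> space M. V \<omega> = n} = {\<omega> \<in> space (sigma_of {Inr (Inr ())}). V \<omega> = n}"
      by (simp add: sigma_of_def space_measure_of_conv)
    then show "X i \<in> borel_measurable (sigma_of (B i))" if "i \<in> {0,1}" for i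
      using that U by (auto simp: X_def B_def)
  qed simp
  moreover have "{\<omega> \<in> space M. V \<omega> = n} \<in> events"
    using V_rv by (simp add: pred_def[symmetric])
  ultimately show ?thesis by (simp add: X_def emeasure_eq_measure)
qed

lemma nn_integral_Msum_stopped_sq:
  "(\<integral>\<^sup>+\<omega>. ennreal ((Msum (V \<omega>) \<omega>)\<^sup>2) \<partial>M)
    = (\<Sum>n. (\<integral>\<^sup>+\<omega>. ennreal ((Msum n \<omega>)\<^sup>2) \<partial>M) * ennreal (measure M {\<omega> \<in> space M. V \<omega> = n}))"
proof -
  have [measurable]: "Msum n \<in> borel_measurable M" "V \<in> measurable M (count_space UNIV)" for n
    by (simp_all add: Msum_rv V_rv)
  have "(\<integral>\<^sup>+\<omega>. ennreal ((Msum (V \<omega>) \<omega>)\<^sup>2) \<partial>M)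
      = (\<integral>\<^sup>+\<omega>. (\<Sum>n. ennreal ((Msum n \<omega>)\<^sup>2) * indicator {\<omega> \<in> space M. V \<omega> = n} \<omega>) \<partial>M)"
  proof (rule nn_integral_cong)
    fix \<omega> assume "\<omega> \<in> space M"
    then have "(\<lambda>n. ennreal ((Msum n \<omega>)\<^sup>2) * indicator {\<omega> \<in> space M. V \<omega> = n} \<omega>)
        = (\<lambda>n. if n = V \<omega> then ennreal ((Msum n \<omega>)\<^sup>2) else 0)"
      by (auto simp: indicator_def)
    then show "ennreal ((Msum (V \<omega>) \<omega>)\<^sup>2)
        = (\<Sum>n. ennreal ((Msum n \<omega>)\<^sup>2) * indicator {\<omega> \<in> space M. V \<omega> = n} \<omega>)"
      using sums_single[of "V \<omega>" "\<lambda>n. ennreal ((Msum n \<omega>)\<^sup>2)"] by (simp add: sums_iff)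
  qed
  also have "\<dots> = (\<Sum>n. \<integral>\<^sup>+\<omega>. ennreal ((Msum n \<omega>)\<^sup>2) * indicator {\<omega> \<in> space M. V \<omega> = n} \<omega> \<partial>M)"
    by (rule nn_integral_suminf) measurable
  also have "\<dots> = (\<Sum>n. (\<integral>\<^sup>+\<omega>. ennreal ((Msum n \<omega>)\<^sup>2) \<partial>M) * ennreal (measure M {\<omega> \<in> space M. V \<omega> = n}))"
    by (intro suminf_cong nn_integral_indicator_V_mult) measurable
  finally show ?thesis .
qed

lemma nn_integral_Mn_stopped_sq:
  assumes t: "t > 0"
    and V_law: "\<And>n. n \<ge> 1 \<Longrightarrow> measure M {\<omega> \<in> space M. V \<omega> = n} = yule_pmf t n"
  shows "(\<integral>\<^sup>+\<omega>. ennreal ((Mn \<alpha> (\<lambda>k. LR k \<omega>) (\<lambda>k. I k \<omega>) (V \<omega>))\<^sup>2) \<partial>M)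
    = ennreal (\<Sum>m. yule_pmf t (Suc m) * moment_seq (2 * S_fun D \<alpha>) (split_var D \<alpha>) (S_fun D (2 * \<alpha>)) (Suc m))"
proof -
  let ?A = "moment_seq (2 * S_fun D \<alpha>) (split_var D \<alpha>) (S_fun D (2 * \<alpha>))"
  have A: "?A n \<ge> 0" for n
    using moment_seq_nonneg S_fun_ge_minus_one split_var_nonneg S_fun_split_var_nonneg by simp
  have "(\<integral>\<^sup>+\<omega>. ennreal ((Mn \<alpha> (\<lambda>k. LR k \<omega>) (\<lambda>k. I k \<omega>) (V \<omega>))\<^sup>2) \<partial>M)
      = (\<integral>\<^sup>+\<omega>. ennreal ((Msum (V \<omega>) \<omega>)\<^sup>2) \<partial>M)"
    using AE_Msum_eq_Mn by (intro nn_integral_cong_AE) (auto elim!: eventually_mono)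
  also have "\<dots> = (\<Sum>m. (\<integral>\<^sup>+\<omega>. ennreal ((Msum (Suc m) \<omega>)\<^sup>2) \<partial>M)
      * ennreal (measure M {\<omega> \<in> space M. V \<omega> = Suc m}))"
    unfolding nn_integral_Msum_stopped_sq
    by (subst suminf_offset[of _ 1]) (simp_all add: Msum_def Mn_def)
  also have "\<dots> = (\<Sum>m. ennreal (yule_pmf t (Suc m) * ?A (Suc m)))"
    using t A by (simp add: nn_integral_Msum_sq V_law yule_pmf_nonneg ennreal_mult mult.commute)
  also have "\<dots> = ennreal (\<Sum>m. yule_pmf t (Suc m) * ?A (Suc m))"
  proof (rule suminf_ennreal2)
    show "\<And>m. 0 \<le> yule_pmf t (Suc m) * ?A (Suc m)" using t A by (simp add: yule_pmf_nonneg)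
    show "summable (\<lambda>m. yule_pmf t (Suc m) * ?A (Suc m))"
      using S_fun_ge_minus_one split_var_nonneg S_fun_split_var_nonneg t
      by (intro yule_average_moment_seq(1)[where \<delta> = "\<bar>S_fun D (2 * \<alpha>) - 2 * S_fun D \<alpha>\<bar> + 1"]) auto
  qed
  finally show ?thesis .
qed

end

theorem lemma5p5:
  fixes M :: "'a measure"
    and D :: "(real \<times> real) measure"
    and LR :: "nat \<Rightarrow> 'a \<Rightarrow> real \<times> real"
    and I :: "nat \<Rightarrow> 'a \<Rightarrow> nat"
    and nu :: "real \<Rightarrow> 'a \<Rightarrow> nat"
    and \<alpha> :: real
  assumes M: "prob_space M"
    and D_nonneg: "AE x in D. fst x \<ge> 0 \<and> snd x \<ge> 0"
    and D_pos: "measure D {x. fst x > 0} + measure D {x. snd x > 0} > 1"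
    and LR_rv: "\<And>n. n \<ge> 1 \<Longrightarrow> LR n \<in> borel_measurable M"
    and LR_law: "\<And>n. n \<ge> 1 \<Longrightarrow> distr M borel (LR n) = D"
    and I_rv: "\<And>n. n \<ge> 1 \<Longrightarrow> I n \<in> measurable M (count_space UNIV)"
    and I_law: "\<And>n k. n \<ge> 1 \<Longrightarrow>
       measure M {\<omega> \<in> space M. I n \<omega> = k} = (if k \<in> {1..n} then 1 / real n else 0)"
    and nu_rv: "\<And>t. t \<ge> 0 \<Longrightarrow> nu t \<in> measurable M (count_space UNIV)"
    and nu_law: "\<And>t n. t \<ge> 0 \<Longrightarrow> n \<ge> 1 \<Longrightarrow>
       measure M {\<omega> \<in> space M. nu t \<omega> = n} = exp (- t) * (1 - exp (- t)) ^ (n - 1)"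
    and indep: "\<And>t. t \<ge> 0 \<Longrightarrow> prob_space.indep_sets M
       (case_sum (\<lambda>n. rv_events M borel (LR n))
          (case_sum (\<lambda>n. rv_events M (count_space UNIV) (I n))
                    (\<lambda>_. rv_events M (count_space UNIV) (nu t)))) idx"
    and alpha_pos: "\<alpha> > 0"
    and moment: "integrable D (\<lambda>x. fst x powr (2 * \<alpha>) + snd x powr (2 * \<alpha>))"
  shows "\<forall>\<eta>>0. \<exists>C>0. \<forall>t\<ge>1.
    ennreal (exp (- 2 * S_fun D \<alpha> * t)) *
      (\<integral>\<^sup>+ \<omega>. ennreal ((Mn \<alpha> (\<lambda>k. LR k \<omega>) (\<lambda>k. I k \<omega>) (nu t \<omega>))\<^sup>2) \<partial>M)
    \<le> ennreal (htilde_fun C \<alpha> (S_fun D \<alpha>) (mu_fun D \<alpha>) (mu_fun D (2 * \<alpha>)) \<eta> t)"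
proof (intro allI impI)
  fix \<eta> :: real assume \<eta>: "\<eta> > 0"
  define S1 where "S1 = S_fun D \<alpha>"
  define S2 where "S2 = S_fun D (2 * \<alpha>)"
  define d where "d = split_var D \<alpha>"
  define B where "B t = exp (- (2 * S1) * t) * (\<Sum>m. yule_pmf t (Suc m) * moment_seq (2 * S1) d S2 (Suc m))"
    for t
  have process: "split_process M D LR I (nu t) \<alpha>" if "t \<ge> 0" for t
    using assms that by (intro split_process.intro split_process_axioms.intro) auto
  have second_moment: "ennreal (exp (- 2 * S_fun D \<alpha> * t)) *
      (\<integral>\<^sup>+ \<omega>. ennreal ((Mn \<alpha> (\<lambda>k. LR k \<omega>) (\<lambda>k. I k \<omega>) (nu t \<omega>))\<^sup>2) \<partial>M) = ennreal (B t)"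
    if t: "t \<ge> 1" for t
  proof -
    have "(\<integral>\<^sup>+ \<omega>. ennreal ((Mn \<alpha> (\<lambda>k. LR k \<omega>) (\<lambda>k. I k \<omega>) (nu t \<omega>))\<^sup>2) \<partial>M)
        = ennreal (\<Sum>m. yule_pmf t (Suc m) * moment_seq (2 * S1) d S2 (Suc m))"
      using split_process.nn_integral_Mn_stopped_sq[OF process] nu_law t
      by (simp add: yule_pmf_def S1_def S2_def d_def)
    then show ?thesis by (simp add: B_def S1_def ennreal_mult')
  qed
  have "\<exists>C>0. \<forall>t\<ge>1. B t \<le> htilde_fun C \<alpha> S1 (S1 / \<alpha>) (S2 / (2 * \<alpha>)) \<eta> t"
  proof (rule exists_htilde_bound[OF alpha_pos \<eta> split_var_nonneg])
    fix t \<delta> :: real assume "t \<ge> 1" "\<delta> \<ge> S2 - 2 * S1" "\<delta> \<noteq> 0"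
    then show "B t \<le> 1 + split_var D \<alpha> * (exp (\<delta> * t) - 1) / \<delta>"
      using S_fun_ge_minus_one[of D \<alpha>] S_fun_ge_minus_one[of D "2 * \<alpha>"]
        split_process.S_fun_split_var_nonneg[OF process[of 0]]
      unfolding B_def S1_def S2_def d_def
      by (intro yule_average_moment_seq(2)) (auto intro: split_var_nonneg)
  qed
  then show "\<exists>C>0. \<forall>t\<ge>1. ennreal (exp (- 2 * S_fun D \<alpha> * t)) *
      (\<integral>\<^sup>+ \<omega>. ennreal ((Mn \<alpha> (\<lambda>k. LR k \<omega>) (\<lambda>k. I k \<omega>) (nu t \<omega>))\<^sup>2) \<partial>M)
    \<le> ennreal (htilde_fun C \<alpha> (S_fun D \<alpha>) (mu_fun D \<alpha>) (mu_fun D (2 * \<alpha>)) \<eta> t)"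
    using second_moment by (auto simp: mu_fun_def S1_def S2_def intro: ennreal_leI)
qed

end
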